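(* Consider the algebraic Riccati operator $$\mathscr R(X)=A^{\mathsf T}XE+E^{\mathsf T}XA+C^{\mathsf T}C-E^{\mathsf T}XBH^{-1}B^{\mathsf T}XE,$$ and let $X_1,\dots,X_n$ ($n\ge2$), with residual factors $R_1,\dots,R_n\in\mathbb{R}^{d\times r}$, inner factor $T$, increments $V_i$ and $\tilde Y_i$ ($i=2,\dots,n$) and shifts $\sigma_1,\dots,\sigma_{n-1}<0$, be generated by the RADI iteration described in the context. Let $\gamma_1,\dots,\gamma_n\in\mathbb{R}$ with $\sum_{i=1}^n\gamma_i=1$ (in particular, the RRE weights), and let $\widehat X=\sum_{i=1}^n\gamma_iX_i$. Then $\operatorname{range}(\mathscr R(\widehat X))\subseteq\operatorname{range}([\,R_1\ R_2\ \cdots\ R_n\,])$, and $$\mathscr R(\widehat X)=[\,R_1\ \cdots\ R_n\,]\,\mathscr H_n\,[\,R_1\ \cdots\ R_n\,]^{\mathsf T},$$ where $\mathscr H_n=\mathscr H_n(\gamma_1,\dots,\gamma_n)$ is the symmetric $nr\times nr$ matrix defined recursively as follows. For $n=2$, $$\mathscr H_2(\gamma_1,\gamma_2)=\begin{bmatrix}\gamma_1^2T+(\gamma_2-\gamma_2^2)\tilde Y_2 & (\gamma_2-\gamma_2^2)(T-\tilde Y_2)\\ (\gamma_2-\gamma_2^2)(T-\tilde Y_2) & \gamma_2^2T+(\gamma_2-\gamma_2^2)\tilde Y_2\end{bmatrix}.$$ For $n\ge3$, $\mathscr H_n=\mathscr A_n+\mathscr B_n+\mathscr C_n$, where $$\mathscr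 A_n=\operatorname{blkdiag}\big(\mathscr H_{n-1}(\gamma_1,\dots,\gamma_{n-2},\gamma_{n-1}+\gamma_n),\ 0_{r\times r}\big),$$ $$\mathscr B_n=\operatorname{blkdiag}\Big(0_{(n-2)r\times(n-2)r},\ \begin{bmatrix}(\gamma_n^2-2\gamma_n)T+(\gamma_n-\gamma_n^2)\tilde Y_n & (\gamma_n-\gamma_n^2)(T-\tilde Y_n)\\ (\gamma_n-\gamma_n^2)(T-\tilde Y_n) & \gamma_n^2T+(\gamma_n-\gamma_n^2)\tilde Y_n\end{bmatrix}\Big),$$ and $\mathscr C_n=\widetilde{\mathscr C}_n+\widetilde{\mathscr C}_n^{\mathsf T}$ with $$\widetilde{\mathscr C}_n=\begin{bmatrix}0_{(n-1)r\times(n-2)r} & M_n^d-M_n^t & M_n^t-M_n^d\\ 0_{r\times(n-2)r} & 0_{r\times r} & 0_{r\times r}\end{bmatrix},$$ where $M_n\in\mathbb{R}^{(n-2)r\times r}$ is the block column whose $i$-th block ($i=2,\dots,n-1$) is $\beta_{ni}\alpha_{in}C_{in}$, $M_n^d=\begin{bmatrix}M_n\\ 0_{r\times r}\end{bmatrix}$, $M_n^t=\begin{bmatrix}0_{r\times r}\\ M_n\end{bmatrix}$, and $$\alpha_{in}=\frac{1}{2\sqrt{\sigma_{i-1}\sigma_{n-1}}},\qquad \beta_{ni}=\gamma_n\sum_{j=1}^{i-1}\gamma_j,\qquad C_{in}=V_i^{\mathsf T}BH^{-1}B^{\mathsf T}V_n\in\mathbb{R}^{r\times r}.$$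
   Context: Data: $A,E\in\mathbb{R}^{d\times d}$, $B\in\mathbb{R}^{d\times p}$, $C\in\mathbb{R}^{q\times d}$, $H\in\mathbb{R}^{p\times p}$ symmetric positive definite. RADI iteration (real shifts): start from $X_1=Z_1D_1Z_1^{\mathsf T}$ with residual $\mathscr R(X_1)=R_1TR_1^{\mathsf T}$, where $R_1\in\mathbb{R}^{d\times r}$ and $T=T^{\mathsf T}\in\mathbb{R}^{r\times r}$ (e.g. $R_1=C^{\mathsf T}$, $T=I$ when $X_1=0$); set $V_1:=Z_1$, $\tilde Y_1^{-1}:=D_1$. For $i=1,2,\dots$, choose $\sigma_i<0$ and set $V_{i+1}=\sqrt{-2\sigma_i}\,(A^{\mathsf T}-E^{\mathsf T}X_iBH^{-1}B^{\mathsf T}+\sigma_iE^{\mathsf T})^{-1}R_iT\in\mathbb{R}^{d\times r}$, $\tilde Y_{i+1}=T-\frac{1}{2\sigma_i}(V_{i+1}^{\mathsf T}B)H^{-1}(V_{i+1}^{\mathsf T}B)^{\mathsf T}$, $\tilde D_{i+1}=\tilde Y_{i+1}^{-1}$, $X_{i+1}=X_i+V_{i+1}\tilde D_{i+1}V_{i+1}^{\mathsf T}$ (so $X_k=\sum_{i=1}^kV_i\tilde Y_i^{-1}V_i^{\mathsf T}$), and $R_{i+1}=R_i+\sqrt{-2\sigma_i}\,E^{\mathsf T}V_{i+1}\tilde D_{i+1}$. All inverses are assumed to exist. Along the iteration $\mathscr R(X_i)=R_iTR_i^{\mathsf T}$ holds with the same inner factor $T$ for all $i$. *)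

theory Defs
  imports "Jordan_Normal_Form.Matrix" "Jordan_Normal_Form.Gauss_Jordan_Elimination"
begin

definition minv :: "real mat \<Rightarrow> real mat" where
  "minv M = the (mat_inverse M)"

definition riccati :: "real mat \<Rightarrow> real mat \<Rightarrow> real mat \<Rightarrow> real mat \<Rightarrow> real mat \<Rightarrow> real mat \<Rightarrow> real mat" where
  "riccati A E B C H X =
     transpose_mat A * X * E + transpose_mat E * X * A + transpose_mat C * C
     - transpose_mat E * X * B * minv H * transpose_mat B * X * E"

definition hcat :: "real mat \<Rightarrow> real mat \<Rightarrow> real mat" where
  "hcat P Q = four_block_mat P Q (0\<^sub>m 0 (dim_col P)) (0\<^sub>m 0 (dim_col Q))"

definition vcat :: "real mat \<Rightarrow> real mat \<Rightarrow> real mat" where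
  "vcat P Q = four_block_mat P (0\<^sub>m (dim_row P) 0) Q (0\<^sub>m (dim_row Q) 0)"

definition blkdiag :: "real mat \<Rightarrow> real mat \<Rightarrow> real mat" where
  "blkdiag P Q = four_block_mat P (0\<^sub>m (dim_row P) (dim_col Q)) (0\<^sub>m (dim_row Q) (dim_col P)) Q"

fun hcats :: "nat \<Rightarrow> (nat \<Rightarrow> real mat) \<Rightarrow> nat \<Rightarrow> real mat" where
  "hcats nr F 0 = 0\<^sub>m nr 0"
| "hcats nr F (Suc k) = hcat (hcats nr F k) (F (Suc k))"

fun vcats :: "nat \<Rightarrow> (nat \<Rightarrow> real mat) \<Rightarrow> nat \<Rightarrow> real mat" where
  "vcats nc F 0 = 0\<^sub>m 0 nc"
| "vcats nc F (Suc k) = vcat (vcats nc F k) (F (Suc k))"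

definition msum :: "nat \<Rightarrow> (nat \<Rightarrow> real mat) \<Rightarrow> nat set \<Rightarrow> real mat" where
  "msum d f I = mat d d (\<lambda>(a,b). \<Sum>i\<in>I. f i $$ (a,b))"

(* Parameters: r (block size), T (inner factor), Y i = \<tilde>Y_i,
   Cc i n = C_{in} = V_i^T B H^-1 B^T V_n, s i = \<sigma>_i, n, g i = \<gamma>_i (1-indexed). *)
fun RHn :: "nat \<Rightarrow> real mat \<Rightarrow> (nat \<Rightarrow> real mat) \<Rightarrow> (nat \<Rightarrow> nat \<Rightarrow> real mat)
             \<Rightarrow> (nat \<Rightarrow> real) \<Rightarrow> nat \<Rightarrow> (nat \<Rightarrow> real) \<Rightarrow> real mat" where
  "RHn r T Y Cc s (Suc (Suc 0)) g =
     (let w = g 2 - (g 2)^2 in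
      four_block_mat ((g 1)^2 \<cdot>\<^sub>m T + w \<cdot>\<^sub>m Y 2) (w \<cdot>\<^sub>m (T - Y 2))
                     (w \<cdot>\<^sub>m (T - Y 2)) ((g 2)^2 \<cdot>\<^sub>m T + w \<cdot>\<^sub>m Y 2))"
| "RHn r T Y Cc s (Suc (Suc (Suc m))) g =
     (let n = Suc (Suc (Suc m));
          An = blkdiag (RHn r T Y Cc s (Suc (Suc m)) (g((n-1) := g (n-1) + g n))) (0\<^sub>m r r);
          w = g n - (g n)^2;
          Bn = blkdiag (0\<^sub>m ((n-2)*r) ((n-2)*r))
                 (four_block_mat (((g n)^2 - 2 * g n) \<cdot>\<^sub>m T + w \<cdot>\<^sub>m Y n) (w \<cdot>\<^sub>m (T - Y n))
                                 (w \<cdot>\<^sub>m (T - Y n)) ((g n)^2 \<cdot>\<^sub>m T + w \<cdot>\<^sub>m Y n));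
          alpha = (\<lambda>i. 1 / (2 * sqrt (s (i-1) * s (n-1))));
          beta = (\<lambda>i. g n * (\<Sum>j=1..i-1. g j));
          Mn = vcats r (\<lambda>k. (beta (k+1) * alpha (k+1)) \<cdot>\<^sub>m Cc (k+1) n) (n-2);
          Md = vcat Mn (0\<^sub>m r r);
          Mt = vcat (0\<^sub>m r r) Mn;
          Ct = vcat (hcat (hcat (0\<^sub>m ((n-1)*r) ((n-2)*r)) (Md - Mt)) (Mt - Md)) (0\<^sub>m r (n*r))
      in An + Bn + (Ct + transpose_mat Ct))"
| "RHn r T Y Cc s _ g = 0\<^sub>m 0 0"

end

theory Submission
  imports Defs "Jordan_Normal_Form.Determinant"
begin

text \<open>Write Delta_i = V_(i+1) Y~_(i+1)^-1 V_(i+1)^T, so that X_(i+1) = X_i + Delta_i and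
  R_(i+1) = R_i + sqrt(-2 \<sigma>_i) E^T V_(i+1) Y~_(i+1)^-1. Merging the last two weights,
  the weighted sum of X_1, ..., X_n equals the weighted sum X' of X_1, ..., X_(n-1) with weights
  (\<gamma>_1, ..., \<gamma>_(n-2), \<gamma>_(n-1) + \<gamma>_n), plus \<gamma>_n Delta_(n-1). Expanding the Riccati
  operator at this rank-r perturbation and eliminating A^T V_n through the linear system that
  defines V_n, together with V_n^T B H^-1 B^T V_n = 2 \<sigma>_(n-1) (T - Y~_n), turns the change of the
  residual into a quadratic form in R_(n-1), R_n -- the block B_n -- plus the cross term
  E^T (X_(n-1) - X') B H^-1 B^T Delta_(n-1) E and its transpose. Because
  X_(n-1) - X' = sum_i (\<gamma>_1 + ... + \<gamma>_i) Delta_i and E^T V_(i+1) Y~_(i+1)^-1 is a multiple of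
  R_(i+1) - R_i, the cross term is the quadratic form of C_n in R_1, ..., R_n, and induction
  on n accounts for the residual of X' through A_n.\<close>

section \<open>Matrix identities with dimension side conditions\<close>

text \<open>Versions of the ring laws whose side conditions are equations between dimensions, which the
  simplifier discharges by itself. Ring identities between real matrices are then proved by
  expanding with mat_expand_simps and comparing entries with mat_entry_simps.\<close>

lemma add_mult_distrib_mat_dim:
  "dim_row B = dim_row A \<Longrightarrow> dim_col A = dim_row C \<Longrightarrow> dim_col B = dim_row C \<Longrightarrow>
   (A + B) * C = A * C + B * (C::real mat)"
  by (rule add_mult_distrib_mat[of _ "dim_row A" "dim_row C" _ _ "dim_col C"]; rule carrier_matI;
    simp)

lemma mult_add_distrib_mat_dim:
  "dim_row B = dim_col A \<Longrightarrow> dim_row C = dim_col A \<Longrightarrow> dim_col B = dim_col C \<Longrightarrow>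
   A * (B + C) = A * B + A * (C::real mat)"
  by (rule mult_add_distrib_mat[of _ "dim_row A" "dim_col A" _ "dim_col C"]; rule carrier_matI;
    simp)

lemma minus_mult_distrib_mat_dim:
  "dim_row B = dim_row A \<Longrightarrow> dim_col A = dim_row C \<Longrightarrow> dim_col B = dim_row C \<Longrightarrow>
   (A - B) * C = A * C - B * (C::real mat)"
  by (rule minus_mult_distrib_mat[of _ "dim_row A" "dim_row C" _ _ "dim_col C"]; rule carrier_matI;
    simp)

lemma mult_minus_distrib_mat_dim:
  "dim_row B = dim_col A \<Longrightarrow> dim_row C = dim_col A \<Longrightarrow> dim_col B = dim_col C \<Longrightarrow>
   A * (B - C) = A * B - A * (C::real mat)"
  by (rule mult_minus_distrib_mat[of _ "dim_row A" "dim_col A" _ "dim_col C"]; rule carrier_matI;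
    simp)

lemma assoc_mult_mat_dim:
  "dim_col A = dim_row B \<Longrightarrow> dim_col B = dim_row C \<Longrightarrow> A * B * C = A * (B * (C::real mat))"
  by (rule assoc_mult_mat[of _ "dim_row A" "dim_col A" _ "dim_col B" _ "dim_col C"];
    rule carrier_matI; simp)

lemma smult_mult_mat_dim: "dim_col A = dim_row B \<Longrightarrow> (c \<cdot>\<^sub>m A) * B = c \<cdot>\<^sub>m (A * (B::real mat))"
  by (rule eq_matI; simp)

lemma mult_smult_mat_dim: "dim_col A = dim_row B \<Longrightarrow> A * (c \<cdot>\<^sub>m B) = c \<cdot>\<^sub>m (A * (B::real mat))"
  by (rule eq_matI; simp)

lemma transpose_add_dim:
  "dim_row A = dim_row B \<Longrightarrow> dim_col A = dim_col B \<Longrightarrow>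
   transpose_mat (A + B) = transpose_mat A + transpose_mat (B::real mat)"
  by (rule eq_matI; simp)

lemma transpose_minus_dim:
  "dim_row A = dim_row B \<Longrightarrow> dim_col A = dim_col B \<Longrightarrow>
   transpose_mat (A - B) = transpose_mat A - transpose_mat (B::real mat)"
  by (rule eq_matI; simp)

lemma transpose_mult_dim:
  "dim_col A = dim_row B \<Longrightarrow> transpose_mat (A * B) = transpose_mat B * transpose_mat (A::real mat)"
  by (rule transpose_mult[of _ "dim_row A" "dim_col A" _ "dim_col B"]; rule carrier_matI; simp)

lemma transpose_smult_mat: "transpose_mat (c \<cdot>\<^sub>m A) = c \<cdot>\<^sub>m transpose_mat (A::real mat)"
  by (rule eq_matI; simp)

lemma smult_add_distrib_mat_dim:
  "dim_row A = dim_row B \<Longrightarrow> dim_col A = dim_col B \<Longrightarrow> c \<cdot>\<^sub>m (A + B) = c \<cdot>\<^sub>m A + c \<cdot>\<^sub>m (B::real mat)"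
  by (rule eq_matI; simp add: algebra_simps)

lemma smult_minus_distrib_mat_dim:
  "dim_row A = dim_row B \<Longrightarrow> dim_col A = dim_col B \<Longrightarrow> c \<cdot>\<^sub>m (A - B) = c \<cdot>\<^sub>m A - c \<cdot>\<^sub>m (B::real mat)"
  by (rule eq_matI; simp add: algebra_simps)

lemma smult_smult_mat: "c \<cdot>\<^sub>m (e \<cdot>\<^sub>m A) = (c * e) \<cdot>\<^sub>m (A::real mat)"
  by (rule eq_matI; simp)

lemmas mat_expand_simps = smult_add_distrib_mat_dim smult_minus_distrib_mat_dim smult_smult_mat
  add_mult_distrib_mat_dim mult_add_distrib_mat_dim minus_mult_distrib_mat_dim
  mult_minus_distrib_mat_dim assoc_mult_mat_dim smult_mult_mat_dim mult_smult_mat_dim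
  transpose_add_dim transpose_minus_dim transpose_mult_dim transpose_smult_mat
lemmas mat_dim_simps = index_mult_mat(2,3) index_add_mat(2,3) index_minus_mat(2,3)
  index_smult_mat(2,3) index_transpose_mat(2,3) index_uminus_mat(2,3)
lemmas mat_entry_simps = index_add_mat(1) index_minus_mat(1) index_smult_mat(1) index_uminus_mat(1)

lemma smult_mult_transpose_smult:
  "dim_col M = dim_col S \<Longrightarrow> (a \<cdot>\<^sub>m M) * transpose_mat (b \<cdot>\<^sub>m S)
    = (a * b) \<cdot>\<^sub>m (M * transpose_mat (S::real mat))"
  by (simp only: mat_expand_simps mat_dim_simps) (simp add: mult.commute)

section \<open>Block matrices\<close>

lemma dim_hcat[simp]: "dim_row (hcat P Q) = dim_row P" "dim_col (hcat P Q) = dim_col P + dim_col Q"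
  unfolding hcat_def by simp_all

lemma dim_vcat[simp]: "dim_row (vcat P Q) = dim_row P + dim_row Q" "dim_col (vcat P Q) = dim_col P"
  unfolding vcat_def by simp_all

lemma dim_blkdiag[simp]:
  "dim_row (blkdiag P Q) = dim_row P + dim_row Q" "dim_col (blkdiag P Q) = dim_col P + dim_col Q"
  unfolding blkdiag_def by simp_all

lemma dim_row_hcats[simp]: "dim_row (hcats nr F k) = nr"
  by (induction k) auto

lemma dim_col_vcats[simp]: "dim_col (vcats nc F k) = nc"
  by (induction k) auto

lemma hcat_carrier_mat[simp]:
  "P \<in> carrier_mat a b \<Longrightarrow> Q \<in> carrier_mat a c \<Longrightarrow> hcat P Q \<in> carrier_mat a (b + c)"
  by (rule carrier_matI) simp_all

lemma vcat_carrier_mat[simp]: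
  "P \<in> carrier_mat a c \<Longrightarrow> Q \<in> carrier_mat b c \<Longrightarrow> vcat P Q \<in> carrier_mat (a + b) c"
  by (rule carrier_matI) simp_all

lemma hcats_carrier_mat:
  "(\<And>i. i \<in> {1..k} \<Longrightarrow> F i \<in> carrier_mat nr c) \<Longrightarrow> hcats nr F k \<in> carrier_mat nr (k * c)"
proof (induction k)
  case (Suc k)
  then have "hcat (hcats nr F k) (F (Suc k)) \<in> carrier_mat nr (k * c + c)"
    by (intro hcat_carrier_mat) auto
  then show ?case by (simp add: add.commute)
qed simp

lemma vcats_carrier_mat:
  "(\<And>i. i \<in> {1..k} \<Longrightarrow> F i \<in> carrier_mat nr c) \<Longrightarrow> vcats c F k \<in> carrier_mat (k * nr) c"
proof (induction k)
  case (Suc k)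
  then have "vcat (vcats c F k) (F (Suc k)) \<in> carrier_mat (k * nr + nr) c"
    by (intro vcat_carrier_mat) auto
  then show ?case by (simp add: add.commute)
qed simp

lemma hcat_mult_vcat:
  assumes "P \<in> carrier_mat a b" "Q \<in> carrier_mat a c" "U \<in> carrier_mat b e" "W \<in> carrier_mat c e"
  shows "hcat P Q * vcat U W = P * U + Q * W"
proof -
  have "hcat P Q * vcat U W = four_block_mat (P * U + Q * W) (P * 0\<^sub>m b 0 + Q * 0\<^sub>m c 0)
     (0\<^sub>m 0 b * U + 0\<^sub>m 0 c * W) (0\<^sub>m 0 b * 0\<^sub>m b 0 + 0\<^sub>m 0 c * 0\<^sub>m c 0)"
    unfolding hcat_def vcat_def using assms
    by (subst mult_four_block_mat[of _ a b _ c _ 0 _ _ e _ 0]) simp_all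
  also have "\<dots> = P * U + Q * W"
    using assms by (intro eq_matI) simp_all
  finally show ?thesis .
qed

lemma transpose_hcat:
  assumes "P \<in> carrier_mat a b" "Q \<in> carrier_mat a c"
  shows "transpose_mat (hcat P Q) = vcat (transpose_mat P) (transpose_mat Q)"
  using assms unfolding hcat_def vcat_def by (intro eq_matI) simp_all

lemma four_block_mat_eq_vcat_hcat:
  assumes "P11 \<in> carrier_mat a b" "P12 \<in> carrier_mat a c"
    "P21 \<in> carrier_mat e b" "P22 \<in> carrier_mat e c"
  shows "four_block_mat P11 P12 P21 P22 = vcat (hcat P11 P12) (hcat P21 P22)"
  using assms unfolding hcat_def vcat_def by (intro eq_matI) (simp_all, linarith)

lemma mult_hcat:
  assumes "M \<in> carrier_mat m a" "P \<in> carrier_mat a b" "Q \<in> carrier_mat a c"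
  shows "M * hcat P Q = hcat (M * P) (M * Q)"
proof -
  have "M = four_block_mat M (0\<^sub>m m 0) (0\<^sub>m 0 a) (0\<^sub>m 0 0)"
    using assms by (intro eq_matI) simp_all
  hence "M * hcat P Q = four_block_mat M (0\<^sub>m m 0) (0\<^sub>m 0 a) (0\<^sub>m 0 0) * hcat P Q" by simp
  also have "\<dots> = four_block_mat (M * P + 0\<^sub>m m 0 * 0\<^sub>m 0 b) (M * Q + 0\<^sub>m m 0 * 0\<^sub>m 0 c)
     (0\<^sub>m 0 a * P + 0\<^sub>m 0 0 * 0\<^sub>m 0 b) (0\<^sub>m 0 a * Q + 0\<^sub>m 0 0 * 0\<^sub>m 0 c)"
    unfolding hcat_def using assms
    by (subst mult_four_block_mat[of _ m a _ 0 _ 0 _ _ b _ c]) simp_all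
  also have "\<dots> = hcat (M * P) (M * Q)"
    unfolding hcat_def using assms by (intro eq_matI) simp_all
  finally show ?thesis .
qed

lemma hcat_zero_left: "R \<in> carrier_mat d k \<Longrightarrow> hcat (0\<^sub>m d 0) R = R"
  unfolding hcat_def by (intro eq_matI) auto

lemma hcat_assoc:
  assumes "P \<in> carrier_mat a b" "Q \<in> carrier_mat a c" "U \<in> carrier_mat a e"
  shows "hcat (hcat P Q) U = hcat P (hcat Q U)"
  using assms unfolding hcat_def by (intro eq_matI) (simp_all, linarith)

lemma vcat_assoc:
  assumes "P \<in> carrier_mat a c" "Q \<in> carrier_mat b c" "U \<in> carrier_mat e c"
  shows "vcat (vcat P Q) U = vcat P (vcat Q U)"
  using assms unfolding vcat_def by (intro eq_matI) (simp_all, linarith)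

lemma vcat_hcat_zero:
  assumes "P \<in> carrier_mat a b" "Q \<in> carrier_mat a c"
  shows "vcat (hcat P Q) (0\<^sub>m r (b + c)) = four_block_mat P Q (0\<^sub>m r b) (0\<^sub>m r c)"
  using assms unfolding hcat_def vcat_def by (intro eq_matI) auto

lemma sandwich_hcat_four_block:
  assumes a: "a \<in> carrier_mat d k1" and b: "b \<in> carrier_mat d k2"
    and P: "P11 \<in> carrier_mat k1 k1" "P12 \<in> carrier_mat k1 k2"
      "P21 \<in> carrier_mat k2 k1" "P22 \<in> carrier_mat k2 k2"
  shows "hcat a b * four_block_mat P11 P12 P21 P22 * transpose_mat (hcat a b)
    = a * P11 * transpose_mat a + a * P12 * transpose_mat b
      + b * P21 * transpose_mat a + b * P22 * transpose_mat b"
proof -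
  have "hcat a b * four_block_mat P11 P12 P21 P22 = a * hcat P11 P12 + b * hcat P21 P22"
    unfolding four_block_mat_eq_vcat_hcat[OF P] using a b P
    by (subst hcat_mult_vcat[of _ d k1 _ k2 _ "k1+k2"]) auto
  also have "\<dots> = hcat (a * P11) (a * P12) + hcat (b * P21) (b * P22)"
    using a b P by (simp add: mult_hcat[of _ d k1 _ k1 _ k2] mult_hcat[of _ d k2 _ k1 _ k2])
  finally have left: "hcat a b * four_block_mat P11 P12 P21 P22 = \<dots>" .
  have c1: "hcat (a * P11) (a * P12) \<in> carrier_mat d (k1+k2)"
    "hcat (b * P21) (b * P22) \<in> carrier_mat d (k1+k2)"
    using a b P by auto
  have c2: "vcat (transpose_mat a) (transpose_mat b) \<in> carrier_mat (k1+k2) d"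
    using a b by auto
  show ?thesis unfolding left transpose_hcat[OF a b]
    apply (subst add_mult_distrib_mat[OF c1 c2])
    apply (subst hcat_mult_vcat[of _ d k1 _ k2 _ d], use a b P in auto)+
    done
qed

lemma sandwich_hcat_blkdiag_zero_right:
  assumes a: "a \<in> carrier_mat d k1" and b: "b \<in> carrier_mat d k2" and M: "M \<in> carrier_mat k1 k1"
  shows "hcat a b * blkdiag M (0\<^sub>m k2 k2) * transpose_mat (hcat a b) = a * M * transpose_mat a"
proof -
  have "hcat a b * blkdiag M (0\<^sub>m k2 k2) * transpose_mat (hcat a b) =
    a * M * transpose_mat a + a * 0\<^sub>m k1 k2 * transpose_mat b
    + b * 0\<^sub>m k2 k1 * transpose_mat a + b * 0\<^sub>m k2 k2 * transpose_mat b"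
    using M
    by (simp only: blkdiag_def carrier_matD index_zero_mat, intro sandwich_hcat_four_block[OF a b]) auto
  also have "\<dots> = a * M * transpose_mat a"
    using a b M by simp
  finally show ?thesis .
qed

lemma sandwich_hcat_blkdiag_zero_left:
  assumes a: "a \<in> carrier_mat d k1" and b: "b \<in> carrier_mat d k2" and M: "M \<in> carrier_mat k2 k2"
  shows "hcat a b * blkdiag (0\<^sub>m k1 k1) M * transpose_mat (hcat a b) = b * M * transpose_mat b"
proof -
  have "hcat a b * blkdiag (0\<^sub>m k1 k1) M * transpose_mat (hcat a b) =
    a * 0\<^sub>m k1 k1 * transpose_mat a + a * 0\<^sub>m k1 k2 * transpose_mat b
    + b * 0\<^sub>m k2 k1 * transpose_mat a + b * M * transpose_mat b"
    using M
    by (simp only: blkdiag_def carrier_matD index_zero_mat, intro sandwich_hcat_four_block[OF a b]) auto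
  also have "\<dots> = b * M * transpose_mat b"
    using a b M by simp
  finally show ?thesis .
qed

lemma sandwich_hcat_upper_rows:
  assumes a: "a \<in> carrier_mat d k" and Rm: "Rm \<in> carrier_mat d r" and Rn: "Rn \<in> carrier_mat d r"
    and U1: "U1 \<in> carrier_mat (k + r) r" and U2: "U2 \<in> carrier_mat (k + r) r"
  shows "hcat (hcat a Rm) Rn * vcat (hcat (hcat (0\<^sub>m (k + r) k) U1) U2) (0\<^sub>m r (k + r + r))
           * transpose_mat (hcat (hcat a Rm) Rn)
    = hcat a Rm * U1 * transpose_mat Rm + hcat a Rm * U2 * transpose_mat Rn"
proof -
  have am: "hcat a Rm \<in> carrier_mat d (k + r)"
    using a Rm by auto
  have h0: "hcat (0\<^sub>m (k + r) k) U1 \<in> carrier_mat (k + r) (k + r)"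
    using U1 by auto
  have "hcat (hcat a Rm) Rn * vcat (hcat (hcat (0\<^sub>m (k + r) k) U1) U2) (0\<^sub>m r (k + r + r))
          * transpose_mat (hcat (hcat a Rm) Rn)
    = hcat a Rm * hcat (0\<^sub>m (k + r) k) U1 * transpose_mat (hcat a Rm)
      + hcat a Rm * U2 * transpose_mat Rn
      + Rn * 0\<^sub>m r (k + r) * transpose_mat (hcat a Rm) + Rn * 0\<^sub>m r r * transpose_mat Rn"
    unfolding vcat_hcat_zero[OF h0 U2] by (rule sandwich_hcat_four_block[OF am Rn h0 U2]) auto
  moreover have "hcat (0\<^sub>m (k + r) k) U1 * transpose_mat (hcat a Rm) = U1 * transpose_mat Rm"
    unfolding transpose_hcat[OF a Rm] using a Rm U1
    by (subst hcat_mult_vcat[of _ "k + r" k _ r _ d]) auto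
  then have "hcat a Rm * hcat (0\<^sub>m (k + r) k) U1 * transpose_mat (hcat a Rm)
      = hcat a Rm * U1 * transpose_mat Rm"
    using am U1 Rm by (subst assoc_mult_mat[of _ d "k + r" _ "k + r" _ d]) auto
  moreover have "Rn * 0\<^sub>m r (k + r) * transpose_mat (hcat a Rm) = 0\<^sub>m d d"
    using am Rn a Rm by (subst assoc_mult_mat[of _ d r _ "k + r" _ d]) auto
  ultimately show ?thesis
    using am Rn Rm U1 U2 by simp
qed

lemma sandwich_add_transpose:
  assumes W: "(W::real mat) \<in> carrier_mat d k"
    and M: "M1 \<in> carrier_mat k k" "M2 \<in> carrier_mat k k" "M3 \<in> carrier_mat k k"
  shows "W * (M1 + M2 + (M3 + transpose_mat M3)) * transpose_mat W =
    W * M1 * transpose_mat W + W * M2 * transpose_mat W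
    + W * M3 * transpose_mat W + transpose_mat (W * M3 * transpose_mat W)"
proof -
  note dims = W[THEN carrier_matD(1)] W[THEN carrier_matD(2)] M[THEN carrier_matD(1)]
    M[THEN carrier_matD(2)]
  show ?thesis
    apply (simp only: mat_expand_simps mat_dim_simps dims simp_thms transpose_transpose)
    apply (rule eq_matI)
     apply (simp_all only: mat_entry_simps mat_dim_simps dims)
    done
qed

lemma mult_mat_vec_in_range:
  assumes W: "W \<in> carrier_mat d k" and N: "N \<in> carrier_mat k d" and y: "y \<in> carrier_vec d"
  shows "\<exists>z \<in> carrier_vec k. W * N *\<^sub>v y = W *\<^sub>v z"
proof
  show "W * N *\<^sub>v y = W *\<^sub>v (N *\<^sub>v y)"
    using W N y by (rule assoc_mult_mat_vec)
  show "N *\<^sub>v y \<in> carrier_vec k"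
    using N y by (rule mult_mat_vec_carrier)
qed

fun sum_upto_mat :: "nat \<Rightarrow> nat \<Rightarrow> (nat \<Rightarrow> real mat) \<Rightarrow> nat \<Rightarrow> real mat" where
  "sum_upto_mat a b F 0 = 0\<^sub>m a b"
| "sum_upto_mat a b F (Suc k) = sum_upto_mat a b F k + F (Suc k)"

lemma sum_upto_mat_carrier:
  "(\<And>i. i \<in> {1..k} \<Longrightarrow> F i \<in> carrier_mat a b) \<Longrightarrow> sum_upto_mat a b F k \<in> carrier_mat a b"
  by (induction k) auto

lemma index_sum_upto_mat:
  "(\<And>i. i \<in> {1..k} \<Longrightarrow> F i \<in> carrier_mat a b) \<Longrightarrow> i < a \<Longrightarrow> j < b \<Longrightarrow>
   sum_upto_mat a b F k $$ (i,j) = (\<Sum>l=1..k. F l $$ (i,j))"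
proof (induction k)
  case (Suc k)
  have "F (Suc k) \<in> carrier_mat a b"
    using Suc by simp
  then have "sum_upto_mat a b F (Suc k) $$ (i,j)
    = sum_upto_mat a b F k $$ (i,j) + F (Suc k) $$ (i,j)"
    unfolding sum_upto_mat.simps using Suc.prems by (intro index_add_mat(1)) auto
  with Suc show ?case
    by simp
qed simp

lemma sum_upto_mat_cong:
  "(\<And>i. i \<in> {1..k} \<Longrightarrow> F i = G i) \<Longrightarrow> sum_upto_mat a b F k = sum_upto_mat a b G k"
  by (induction k) auto

lemma sum_upto_mat_mult_right:
  assumes "\<And>i. i \<in> {1..k} \<Longrightarrow> F i \<in> carrier_mat a b" "M \<in> carrier_mat b c"
  shows "sum_upto_mat a b F k * M = sum_upto_mat a c (\<lambda>i. F i * M) k"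
  using assms
proof (induction k)
  case (Suc k)
  have "F (Suc k) \<in> carrier_mat a b" "sum_upto_mat a b F k \<in> carrier_mat a b"
    using Suc by (auto intro!: sum_upto_mat_carrier)
  with Suc show ?case
    by (simp add: add_mult_distrib_mat[of _ a b])
qed simp

lemma sum_upto_mat_mult_left:
  assumes "\<And>i. i \<in> {1..k} \<Longrightarrow> F i \<in> carrier_mat a b" "M \<in> carrier_mat c a"
  shows "M * sum_upto_mat a b F k = sum_upto_mat c b (\<lambda>i. M * F i) k"
  using assms
proof (induction k)
  case (Suc k)
  have "F (Suc k) \<in> carrier_mat a b" "sum_upto_mat a b F k \<in> carrier_mat a b"
    using Suc by (auto intro!: sum_upto_mat_carrier)
  with Suc show ?case
    by (simp add: mult_add_distrib_mat[of _ c a])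
qed simp

lemma sum_upto_mat_sandwich:
  assumes F: "\<And>i. i \<in> {1..k} \<Longrightarrow> F i \<in> carrier_mat a b"
    and L: "L \<in> carrier_mat c a" and M: "M \<in> carrier_mat b e"
  shows "L * sum_upto_mat a b F k * M = sum_upto_mat c e (\<lambda>i. L * F i * M) k"
proof -
  have "L * sum_upto_mat a b F k = sum_upto_mat c b (\<lambda>i. L * F i) k"
    by (rule sum_upto_mat_mult_left[OF F L])
  moreover have "sum_upto_mat c b (\<lambda>i. L * F i) k * M = sum_upto_mat c e (\<lambda>i. L * F i * M) k"
    by (rule sum_upto_mat_mult_right) (use F L M in auto)
  ultimately show ?thesis
    by simp
qed

lemma sum_upto_mat_smult:
  assumes "\<And>i. i \<in> {1..k} \<Longrightarrow> F i \<in> carrier_mat a b"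
  shows "x \<cdot>\<^sub>m sum_upto_mat a b F k = sum_upto_mat a b (\<lambda>i. x \<cdot>\<^sub>m F i) k"
  using assms
proof (induction k)
  case 0
  show ?case
    by (intro eq_matI) auto
next
  case (Suc k)
  have "F (Suc k) \<in> carrier_mat a b" "sum_upto_mat a b F k \<in> carrier_mat a b"
    using Suc by (auto intro!: sum_upto_mat_carrier)
  with Suc show ?case
    by (simp add: add_smult_distrib_left_mat[of _ a b])
qed

lemma sum_upto_mat_minus:
  assumes "\<And>i. i \<in> {1..k} \<Longrightarrow> F i \<in> carrier_mat a b" "\<And>i. i \<in> {1..k} \<Longrightarrow> G i \<in> carrier_mat a b"
  shows "sum_upto_mat a b F k - sum_upto_mat a b G k = sum_upto_mat a b (\<lambda>i. F i - G i) k"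
  using assms
proof (induction k)
  case 0
  show ?case
    by (intro eq_matI) auto
next
  case (Suc k)
  have c: "F (Suc k) \<in> carrier_mat a b" "G (Suc k) \<in> carrier_mat a b"
    "sum_upto_mat a b F k \<in> carrier_mat a b" "sum_upto_mat a b G k \<in> carrier_mat a b"
    using Suc by (auto intro!: sum_upto_mat_carrier)
  then have "(sum_upto_mat a b F k + F (Suc k)) - (sum_upto_mat a b G k + G (Suc k))
    = (sum_upto_mat a b F k - sum_upto_mat a b G k) + (F (Suc k) - G (Suc k))"
    by (intro eq_matI) auto
  with Suc show ?case
    by simp
qed

lemma hcats_mult_vcats:
  assumes "\<And>i. i \<in> {1..k} \<Longrightarrow> F i \<in> carrier_mat a b" "\<And>i. i \<in> {1..k} \<Longrightarrow> G i \<in> carrier_mat b c"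
  shows "hcats a F k * vcats c G k = sum_upto_mat a c (\<lambda>i. F i * G i) k"
  using assms
proof (induction k)
  case 0
  show ?case
    by (intro eq_matI) auto
next
  case (Suc k)
  have "hcats a F k \<in> carrier_mat a (k*b)" "vcats c G k \<in> carrier_mat (k*b) c"
    using Suc by (auto intro!: hcats_carrier_mat vcats_carrier_mat)
  with Suc have "hcats a F (Suc k) * vcats c G (Suc k)
    = hcats a F k * vcats c G k + F (Suc k) * G (Suc k)"
    by (simp add: hcat_mult_vcat[of _ a "k*b" _ b _ c])
  with Suc show ?case
    by simp
qed

lemma hcats_mult_shifted_vcats:
  assumes "\<And>i. i \<in> {1..Suc k} \<Longrightarrow> F i \<in> carrier_mat a b" "\<And>i. i \<in> {1..k} \<Longrightarrow> G i \<in> carrier_mat b c"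
  shows "hcats a F (Suc k) * vcat (0\<^sub>m b c) (vcats c G k)
    = sum_upto_mat a c (\<lambda>i. F (Suc i) * G i) k"
  using assms
proof (induction k)
  case 0
  have "hcats a F (Suc 0) * vcat (0\<^sub>m b c) (vcats c G 0)
    = hcat (0\<^sub>m a 0) (F 1) * vcat (0\<^sub>m 0 c) (0\<^sub>m b c)"
    by (simp add: vcat_def)
  also have "\<dots> = 0\<^sub>m a 0 * 0\<^sub>m 0 c + F 1 * 0\<^sub>m b c"
    using 0 by (intro hcat_mult_vcat) auto
  also have "\<dots> = 0\<^sub>m a c"
    using 0 by simp
  finally show ?case
    by simp
next
  case (Suc k)
  have cF: "hcats a F (Suc k) \<in> carrier_mat a (Suc k * b)"
    using Suc by (intro hcats_carrier_mat) auto
  have cG: "vcats c G k \<in> carrier_mat (k * b) c" and G: "G (Suc k) \<in> carrier_mat b c"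
    using Suc by (auto intro!: vcats_carrier_mat)
  have "vcat (0\<^sub>m b c) (vcats c G (Suc k)) = vcat (vcat (0\<^sub>m b c) (vcats c G k)) (G (Suc k))"
    using cG G vcat_assoc[of "0\<^sub>m b c" b c "vcats c G k" "k*b" "G (Suc k)" b] by simp
  moreover have "vcat (0\<^sub>m b c) (vcats c G k) \<in> carrier_mat (Suc k * b) c"
    using cG vcat_carrier_mat[of "0\<^sub>m b c" b c "vcats c G k" "k*b"] by simp
  ultimately have "hcats a F (Suc (Suc k)) * vcat (0\<^sub>m b c) (vcats c G (Suc k)) =
      hcats a F (Suc k) * vcat (0\<^sub>m b c) (vcats c G k) + F (Suc (Suc k)) * G (Suc k)"
    using Suc cF G by (simp add: hcat_mult_vcat[of _ a "Suc k*b" _ b _ c])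
  with Suc show ?case
    by simp
qed

lemma hcats_mult_vcats_shift_diff:
  assumes F: "\<And>i. i \<in> {1..Suc k} \<Longrightarrow> F i \<in> carrier_mat a b"
    and G: "\<And>i. i \<in> {1..k} \<Longrightarrow> G i \<in> carrier_mat b c"
  shows "hcats a F (Suc k) * (vcat (vcats c G k) (0\<^sub>m b c) - vcat (0\<^sub>m b c) (vcats c G k))
    = sum_upto_mat a c (\<lambda>i. (F i - F (Suc i)) * G i) k"
proof -
  have hF: "hcats a F k \<in> carrier_mat a (k * b)"
    using F by (intro hcats_carrier_mat) auto
  have hF': "hcats a F (Suc k) \<in> carrier_mat a (Suc k * b)"
    by (rule hcats_carrier_mat[OF F])
  have vG: "vcats c G k \<in> carrier_mat (k * b) c"
    using G by (rule vcats_carrier_mat)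
  have FG: "\<And>i. i \<in> {1..k} \<Longrightarrow> F i * G i \<in> carrier_mat a c"
    "\<And>i. i \<in> {1..k} \<Longrightarrow> F (Suc i) * G i \<in> carrier_mat a c"
    using F G by (meson atLeastAtMost_iff le_SucI mult_carrier_mat Suc_le_mono)+
  have "hcats a F (Suc k) * vcat (vcats c G k) (0\<^sub>m b c)
    = hcats a F k * vcats c G k + F (Suc k) * 0\<^sub>m b c"
    using hF vG F by (simp add: hcat_mult_vcat[of _ a "k * b" _ b _ c])
  also have "\<dots> = sum_upto_mat a c (\<lambda>i. F i * G i) k"
  proof -
    have "hcats a F k * vcats c G k = sum_upto_mat a c (\<lambda>i. F i * G i) k"
      by (rule hcats_mult_vcats) (use F G in auto)
    moreover have "sum_upto_mat a c (\<lambda>i. F i * G i) k \<in> carrier_mat a c"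
      using FG(1) by (rule sum_upto_mat_carrier)
    moreover have "F (Suc k) * 0\<^sub>m b c = 0\<^sub>m a c"
      using F[of "Suc k"] by simp
    ultimately show ?thesis
      by simp
  qed
  finally have first: "hcats a F (Suc k) * vcat (vcats c G k) (0\<^sub>m b c) = \<dots>" .
  have "hcats a F (Suc k) * (vcat (vcats c G k) (0\<^sub>m b c) - vcat (0\<^sub>m b c) (vcats c G k))
    = sum_upto_mat a c (\<lambda>i. F i * G i) k - sum_upto_mat a c (\<lambda>i. F (Suc i) * G i) k"
  proof -
    have "vcat (vcats c G k) (0\<^sub>m b c) \<in> carrier_mat (Suc k * b) c"
      "vcat (0\<^sub>m b c) (vcats c G k) \<in> carrier_mat (Suc k * b) c"
      using vG by (intro carrier_matI; simp)+
    moreover have "hcats a F (Suc k) * vcat (0\<^sub>m b c) (vcats c G k)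
      = sum_upto_mat a c (\<lambda>i. F (Suc i) * G i) k"
      by (rule hcats_mult_shifted_vcats) (use F G in auto)
    ultimately show ?thesis
      using mult_minus_distrib_mat[OF hF'] first by simp
  qed
  also have "\<dots> = sum_upto_mat a c (\<lambda>i. F i * G i - F (Suc i) * G i) k"
    by (rule sum_upto_mat_minus[OF FG])
  also have "\<dots> = sum_upto_mat a c (\<lambda>i. (F i - F (Suc i)) * G i) k"
  proof (rule sum_upto_mat_cong)
    fix i assume "i \<in> {1..k}"
    then have "F i \<in> carrier_mat a b" "F (Suc i) \<in> carrier_mat a b" "G i \<in> carrier_mat b c"
      using F G by auto
    then show "F i * G i - F (Suc i) * G i = (F i - F (Suc i)) * G i"
      by (rule minus_mult_distrib_mat[symmetric])
  qed
  finally show ?thesis .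
qed

lemma dim_msum[simp]: "dim_row (msum d f I) = d" "dim_col (msum d f I) = d"
  unfolding msum_def by simp_all

lemma index_msum[simp]: "a < d \<Longrightarrow> b < d \<Longrightarrow> msum d f I $$ (a,b) = (\<Sum>i\<in>I. f i $$ (a,b))"
  unfolding msum_def by simp

lemma index_msum_smult:
  "(\<And>i. i \<in> I \<Longrightarrow> M i \<in> carrier_mat d d) \<Longrightarrow> a < d \<Longrightarrow> b < d \<Longrightarrow>
   msum d (\<lambda>i. c i \<cdot>\<^sub>m M i) I $$ (a,b) = (\<Sum>i\<in>I. c i * M i $$ (a,b))"
proof -
  assume M: "\<And>i. i \<in> I \<Longrightarrow> M i \<in> carrier_mat d d" and ab: "a < d" "b < d"
  have "(c i \<cdot>\<^sub>m M i) $$ (a,b) = c i * M i $$ (a,b)" if "i \<in> I" for i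
    using M[OF that] ab by simp
  then show ?thesis
    using ab by simp
qed

lemma minv_unit:
  assumes A: "A \<in> carrier_mat n n" and U: "A \<in> Units (ring_mat TYPE(real) n b)"
  shows "A * minv A = 1\<^sub>m n" "minv A * A = 1\<^sub>m n" "minv A \<in> carrier_mat n n"
proof -
  have "mat_inverse A \<noteq> None"
    using mat_inverse(1)[OF A, where b = b] U by auto
  then obtain M where M: "mat_inverse A = Some M"
    by auto
  from mat_inverse(2)[OF A M]
  show "A * minv A = 1\<^sub>m n" "minv A * A = 1\<^sub>m n" "minv A \<in> carrier_mat n n"
    unfolding minv_def M by auto
qed

lemma invertible_mat_unit:
  assumes A: "A \<in> carrier_mat n n" and inv: "invertible_mat A"
  shows "A \<in> Units (ring_mat TYPE(real) n b)"
proof -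
  from inv obtain M where AM: "A * M = 1\<^sub>m (dim_row A)" and MA: "M * A = 1\<^sub>m (dim_row M)"
    unfolding invertible_mat_def inverts_mat_def by auto
  have "dim_col M = n"
    using AM A by (metis carrier_matD(1) index_mult_mat(3) index_one_mat(3))
  moreover have "dim_row M = n"
    using MA A by (metis carrier_matD(2) index_mult_mat(3) index_one_mat(3))
  ultimately show ?thesis
    unfolding Units_def ring_mat_def using A AM MA by auto
qed

lemma minv_invertible:
  assumes "A \<in> carrier_mat n n" and "invertible_mat A"
  shows "A * minv A = 1\<^sub>m n" "minv A * A = 1\<^sub>m n" "minv A \<in> carrier_mat n n"
  using minv_unit[OF assms(1) invertible_mat_unit[OF assms]] by auto

lemma inverse_of_symmetric:
  assumes A: "(A::real mat) \<in> carrier_mat n n" and M: "M \<in> carrier_mat n n"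
    and AM: "A * M = 1\<^sub>m n" and MA: "M * A = 1\<^sub>m n" and sym: "transpose_mat A = A"
  shows "transpose_mat M = M"
proof -
  have "transpose_mat M * A = transpose_mat (A * M)"
    using A M sym by (metis transpose_mult)
  then have MtA: "transpose_mat M * A = 1\<^sub>m n"
    using AM by simp
  have "transpose_mat M = transpose_mat M * (A * M)"
    using AM M by simp
  also have "\<dots> = (transpose_mat M * A) * M"
    using A M by (simp add: assoc_mult_mat[of _ n n _ n _ n])
  finally show ?thesis
    using MtA M by simp
qed

lemma pos_def_unit:
  assumes H: "H \<in> carrier_mat p p"
    and pd: "\<forall>x \<in> carrier_vec p. x \<noteq> 0\<^sub>v p \<longrightarrow> x \<bullet> (H *\<^sub>v x) > (0::real)"
  shows "H \<in> Units (ring_mat TYPE(real) p b)"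
proof (rule det_non_zero_imp_unit[OF H])
  show "det H \<noteq> 0"
  proof
    assume "det H = 0"
    then obtain v where "v \<in> carrier_vec p" "v \<noteq> 0\<^sub>v p" "H *\<^sub>v v = 0\<^sub>v p"
      using det_0_iff_vec_prod_zero[OF H] by auto
    with pd show False
      by fastforce
  qed
qed

section \<open>Perturbing the Riccati operator\<close>

lemma shifted_system_eliminate_A:
  fixes A E B H Xm V Rm T :: "real mat"
  assumes A: "A \<in> carrier_mat d d" and E: "E \<in> carrier_mat d d" and B: "B \<in> carrier_mat d p"
    and Hi: "minv H \<in> carrier_mat p p" and Hsym: "transpose_mat (minv H) = minv H"
    and Xm: "Xm \<in> carrier_mat d d" and Xmsym: "transpose_mat Xm = Xm"
    and V: "V \<in> carrier_mat d r" and Rm: "Rm \<in> carrier_mat d r"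
    and T: "T \<in> carrier_mat r r" and Tsym: "transpose_mat T = T"
    and hK: "(transpose_mat A - transpose_mat E * Xm * B * minv H * transpose_mat B
      + \<sigma> \<cdot>\<^sub>m transpose_mat E) * V
      = s \<cdot>\<^sub>m (Rm * T)"
  shows "dim_row Z = r \<Longrightarrow> transpose_mat A * (V * Z) = s \<cdot>\<^sub>m (Rm * (T * Z))
      + transpose_mat E * (Xm * (B * (minv H * (transpose_mat B * (V * Z)))))
        - \<sigma> \<cdot>\<^sub>m (transpose_mat E * (V * Z))"
    and "transpose_mat V * A = s \<cdot>\<^sub>m (T * transpose_mat Rm)
      + transpose_mat V * (B * (minv H * (transpose_mat B * (Xm * E))))
        - \<sigma> \<cdot>\<^sub>m (transpose_mat V * E)"
proof -
  note cars = A E B Hi Xm V T Rm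
  note dims = cars[THEN carrier_matD(1)] cars[THEN carrier_matD(2)]
  show "transpose_mat A * (V * Z) = s \<cdot>\<^sub>m (Rm * (T * Z))
      + transpose_mat E * (Xm * (B * (minv H * (transpose_mat B * (V * Z)))))
        - \<sigma> \<cdot>\<^sub>m (transpose_mat E * (V * Z))"
    if Z: "dim_row Z = r"
  proof -
    from hK have h:
      "(transpose_mat A - transpose_mat E * Xm * B * minv H * transpose_mat B
      + \<sigma> \<cdot>\<^sub>m transpose_mat E) * V * Z = s \<cdot>\<^sub>m (Rm * T) * Z" by simp
    have h2: "(transpose_mat A * (V * Z)
      - transpose_mat E * (Xm * (B * (minv H * (transpose_mat B * (V * Z)))))
      + \<sigma> \<cdot>\<^sub>m (transpose_mat E * (V * Z))) = s \<cdot>\<^sub>m (Rm * (T * Z))"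
      using h by (simp only: mat_expand_simps mat_dim_simps dims Z simp_thms)
    show ?thesis
      apply (rule eq_matI)
      subgoal for i j using arg_cong[OF h2, of "\<lambda>M. M $$ (i,j)"]
        by (simp only: mat_entry_simps mat_dim_simps dims Z; linarith)
      by (simp_all only: mat_dim_simps dims Z)
  qed
  show "transpose_mat V * A = s \<cdot>\<^sub>m (T * transpose_mat Rm)
      + transpose_mat V * (B * (minv H * (transpose_mat B * (Xm * E))))
        - \<sigma> \<cdot>\<^sub>m (transpose_mat V * E)"
  proof -
    from hK have h: "transpose_mat
      ((transpose_mat A - transpose_mat E * Xm * B * minv H * transpose_mat B
      + \<sigma> \<cdot>\<^sub>m transpose_mat E) * V) = transpose_mat (s \<cdot>\<^sub>m (Rm * T))" by simp
    have h2: "transpose_mat V * A - transpose_mat V * (B * (minv H * (transpose_mat B * (Xm * E))))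
      + \<sigma> \<cdot>\<^sub>m (transpose_mat V * E) = s \<cdot>\<^sub>m (T * transpose_mat Rm)"
      using h by (simp only: mat_expand_simps mat_dim_simps dims simp_thms transpose_transpose Hsym
        Xmsym Tsym)
    show ?thesis
      apply (rule eq_matI)
      subgoal for i j using arg_cong[OF h2, of "\<lambda>M. M $$ (i,j)"]
        by (simp only: mat_entry_simps mat_dim_simps dims; linarith)
      by (simp_all only: mat_dim_simps dims)
  qed
qed

lemma riccati_rank_update:
  fixes A E B C H Xp Xm V D Y T Rm P :: "real mat"
  assumes A: "A \<in> carrier_mat d d" and E: "E \<in> carrier_mat d d"
    and B: "B \<in> carrier_mat d p" and C: "C \<in> carrier_mat q d"
    and Hi: "minv H \<in> carrier_mat p p" and Hsym: "transpose_mat (minv H) = minv H"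
    and Xp: "Xp \<in> carrier_mat d d" and Xpsym: "transpose_mat Xp = Xp"
    and Xm: "Xm \<in> carrier_mat d d" and Xmsym: "transpose_mat Xm = Xm"
    and V: "V \<in> carrier_mat d r" and D: "D \<in> carrier_mat r r" and Dsym: "transpose_mat D = D"
    and Y: "Y \<in> carrier_mat r r" and T: "T \<in> carrier_mat r r" and Tsym: "transpose_mat T = T"
    and Rm: "Rm \<in> carrier_mat d r"
    and P: "P = transpose_mat E * V * D"
    and hK: "(transpose_mat A - transpose_mat E * Xm * B * minv H * transpose_mat B
      + \<sigma> \<cdot>\<^sub>m transpose_mat E) * V = s \<cdot>\<^sub>m (Rm * T)"
    and hVGV: "transpose_mat V * B * minv H * transpose_mat B * V = (2*\<sigma>) \<cdot>\<^sub>m (T - Y)"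
    and hYD: "Y * D = 1\<^sub>m r"
    and hss: "s * s = -2*\<sigma>"
  shows "riccati A E B C H (Xp + \<gamma> \<cdot>\<^sub>m (V * D * transpose_mat V))
     = riccati A E B C H Xp + (\<gamma>*s) \<cdot>\<^sub>m (Rm * T * transpose_mat P + P * T * transpose_mat Rm)
       - (2*\<gamma>*\<sigma>) \<cdot>\<^sub>m (P * Y * transpose_mat P) - (2*\<gamma>*\<gamma>*\<sigma>) \<cdot>\<^sub>m (P * (T - Y) * transpose_mat P)
       + \<gamma> \<cdot>\<^sub>m
         (transpose_mat E * (Xm - Xp) * B * minv H * transpose_mat B * (V * D * transpose_mat V) * E
               + transpose_mat
                 (transpose_mat E * (Xm - Xp) * B * minv H * transpose_mat B
                 * (V * D * transpose_mat V) * E))"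
proof -
  note cars = A E B C Hi Xp Xm V D Y T Rm
  note dims = cars[THEN carrier_matD(1)] cars[THEN carrier_matD(2)]
  note elim = shifted_system_eliminate_A[OF A E B Hi Hsym Xm Xmsym V Rm T Tsym hK]
  have VtGV: "transpose_mat V * (B * (minv H * (transpose_mat B * (V * Z))))
    = (2*\<sigma>) \<cdot>\<^sub>m (T * Z) - (2*\<sigma>) \<cdot>\<^sub>m (Y * Z)"
    if Z: "dim_row Z = r" for Z
  proof -
    from hVGV have h: "transpose_mat V * B * minv H * transpose_mat B * V * Z
      = (2*\<sigma>) \<cdot>\<^sub>m (T - Y) * Z" by simp
    show ?thesis using h by (simp only: mat_expand_simps mat_dim_simps dims Z simp_thms)
  qed
  have DYD: "D * (Y * (D * Z)) = D * Z" if Z: "dim_row Z = r" for Z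
  proof -
    have "D * (Y * (D * Z))
      = D * (Y * D) * Z" by (simp only: mat_expand_simps mat_dim_simps dims Z simp_thms)
    also have "\<dots> = D * Z" using D by (simp add: hYD)
    finally show ?thesis .
  qed
  have sig: "\<sigma> = - (s*s)/2" using hss by simp
  show ?thesis
    unfolding riccati_def P
    apply (simp only: mat_expand_simps mat_dim_simps dims simp_thms transpose_transpose Hsym Xmsym
      Tsym Xpsym Dsym)
    apply (simp only: elim VtGV DYD mat_dim_simps dims simp_thms)
    apply (simp only: mat_expand_simps DYD mat_dim_simps dims simp_thms transpose_transpose Hsym
      Xmsym Tsym Xpsym Dsym)
    apply (rule eq_matI)
     apply (simp_all only: mat_entry_simps mat_dim_simps dims sig)
    done
qed

definition step_block :: "real \<Rightarrow> real \<Rightarrow> real mat \<Rightarrow> real mat \<Rightarrow> real mat" where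
  "step_block c \<gamma> T Y =
     four_block_mat ((\<gamma>^2 - 2 * \<gamma> + c) \<cdot>\<^sub>m T + (\<gamma> - \<gamma>^2) \<cdot>\<^sub>m Y) ((\<gamma> - \<gamma>^2) \<cdot>\<^sub>m (T - Y))
                    ((\<gamma> - \<gamma>^2) \<cdot>\<^sub>m (T - Y)) (\<gamma>^2 \<cdot>\<^sub>m T + (\<gamma> - \<gamma>^2) \<cdot>\<^sub>m Y)"

lemma step_block_carrier:
  "T \<in> carrier_mat r r \<Longrightarrow> Y \<in> carrier_mat r r \<Longrightarrow> step_block c \<gamma> T Y \<in> carrier_mat (r + r) (r + r)"
  unfolding step_block_def by (intro carrier_matI) auto

lemma sandwich_step_block:
  assumes Rm: "Rm \<in> carrier_mat d r" and P: "P \<in> carrier_mat d r"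
    and T: "T \<in> carrier_mat r r" and Y: "Y \<in> carrier_mat r r" and hss: "s * s = -2 * \<sigma>"
  shows "hcat Rm (Rm + s \<cdot>\<^sub>m P) * step_block c \<gamma> T Y * transpose_mat (hcat Rm (Rm + s \<cdot>\<^sub>m P))
   = c \<cdot>\<^sub>m (Rm * T * transpose_mat Rm)
     + (\<gamma>*s) \<cdot>\<^sub>m (Rm * T * transpose_mat P + P * T * transpose_mat Rm)
       - (2*\<gamma>*\<sigma>) \<cdot>\<^sub>m (P * Y * transpose_mat P) - (2*\<gamma>*\<gamma>*\<sigma>) \<cdot>\<^sub>m (P * (T - Y) * transpose_mat P)"
    (is "?lhs = ?rhs")
proof -
  note cars = Rm P T Y
  note dims = cars[THEN carrier_matD(1)] cars[THEN carrier_matD(2)]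
  define w where "w = \<gamma> - \<gamma>^2"
  have RP: "Rm + s \<cdot>\<^sub>m P \<in> carrier_mat d r"
    using Rm P by simp
  have "?lhs = Rm * ((\<gamma>^2 - 2 * \<gamma> + c) \<cdot>\<^sub>m T + w \<cdot>\<^sub>m Y) * transpose_mat Rm
      + Rm * (w \<cdot>\<^sub>m (T - Y)) * transpose_mat (Rm + s \<cdot>\<^sub>m P)
      + (Rm + s \<cdot>\<^sub>m P) * (w \<cdot>\<^sub>m (T - Y)) * transpose_mat Rm
      + (Rm + s \<cdot>\<^sub>m P) * (\<gamma>^2 \<cdot>\<^sub>m T + w \<cdot>\<^sub>m Y) * transpose_mat (Rm + s \<cdot>\<^sub>m P)"
    unfolding step_block_def w_def using T Y by (intro sandwich_hcat_four_block[OF Rm RP]) auto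
  also have "\<dots> = ?rhs"
  proof -
    have sig: "\<sigma> = - (s*s)/2"
      using hss by simp
    show ?thesis
      unfolding w_def
      apply (simp only: mat_expand_simps mat_dim_simps dims simp_thms transpose_transpose)
      apply (rule eq_matI)
       apply (simp_all only: mat_entry_simps mat_dim_simps dims sig)
      apply (simp add: algebra_simps power2_eq_square)
      done
  qed
  finally show ?thesis .
qed

section \<open>The recursion for the inner factor\<close>

text \<open>For n = k + 3 these are the quantities of the paper: cross_weight s g k i is
  \<beta>_(n,i+1) \<alpha>_(i+1,n), cross_col is M_n, and cross_block is the matrix C~_n with
  C_n = C~_n + C~_n^T.\<close>

definition cross_weight :: "(nat \<Rightarrow> real) \<Rightarrow> (nat \<Rightarrow> real) \<Rightarrow> nat \<Rightarrow> nat \<Rightarrow> real" where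
  "cross_weight s g k i = g (Suc (Suc (Suc k))) * sum g {1..i} / (2 * sqrt (s i * s (Suc (Suc k))))"

definition cross_col ::
  "nat \<Rightarrow> (nat \<Rightarrow> nat \<Rightarrow> real mat) \<Rightarrow> (nat \<Rightarrow> real) \<Rightarrow> nat \<Rightarrow> (nat \<Rightarrow> real) \<Rightarrow> real mat" where
  "cross_col r Cc s k g =
     vcats r (\<lambda>i. cross_weight s g k i \<cdot>\<^sub>m Cc (Suc i) (Suc (Suc (Suc k)))) (Suc k)"

definition cross_block :: "nat \<Rightarrow> nat \<Rightarrow> real mat \<Rightarrow> real mat" where
  "cross_block r k M =
     vcat (hcat (hcat (0\<^sub>m (Suc (Suc k) * r) (Suc k * r)) (vcat M (0\<^sub>m r r) - vcat (0\<^sub>m r r) M))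
                (vcat (0\<^sub>m r r) M - vcat M (0\<^sub>m r r)))
          (0\<^sub>m r (Suc (Suc (Suc k)) * r))"

lemma RHn_two:
  assumes "g 1 + g 2 = 1"
  shows "RHn r T Y Cc s 2 g = step_block 1 (g 2) T (Y 2)"
proof -
  have g1: "g 1 = 1 - g 2"
    using assms by simp
  have "(g 1)^2 = (g 2)^2 - 2 * g 2 + 1"
    unfolding g1 by (simp add: power2_eq_square algebra_simps)
  then show ?thesis
    by (simp add: numeral_2_eq_2 step_block_def Let_def)
qed

lemma RHn_Suc_Suc_Suc:
  "RHn r T Y Cc s (Suc (Suc (Suc k))) g =
     blkdiag (RHn r T Y Cc s (Suc (Suc k))
       (g(Suc (Suc k) := g (Suc (Suc k)) + g (Suc (Suc (Suc k))))))
       (0\<^sub>m r r)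
   + blkdiag (0\<^sub>m (Suc k * r) (Suc k * r))
     (step_block 0 (g (Suc (Suc (Suc k)))) T (Y (Suc (Suc (Suc k)))))
   + (cross_block r k (cross_col r Cc s k g)
     + transpose_mat (cross_block r k (cross_col r Cc s k g)))"
  by (simp add: Let_def step_block_def cross_block_def cross_col_def cross_weight_def)

lemma RHn_carrier:
  assumes "k \<ge> 2" "T \<in> carrier_mat r r" "\<And>i. i \<in> {2..k} \<Longrightarrow> Y i \<in> carrier_mat r r"
    "\<And>i j. i \<in> {2..k} \<Longrightarrow> j \<in> {2..k} \<Longrightarrow> Cc i j \<in> carrier_mat r r"
  shows "RHn r T Y Cc s k g \<in> carrier_mat (k*r) (k*r)"
  using assms
proof (induction k arbitrary: g rule: less_induct)
  case (less k)
  show ?case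
  proof (cases "k = 2")
    case True
    then show ?thesis using less.prems by (simp add: Let_def numeral_2_eq_2)
  next
    case False
    then obtain m where k: "k = Suc (Suc (Suc m))" using less.prems(1)
      by (cases k; cases "k - 1"; cases "k - 2") auto
    define n where "n = Suc (Suc (Suc m))"
    have IH: "RHn r T Y Cc s (Suc (Suc m)) g' \<in> carrier_mat (Suc (Suc m) * r) (Suc (Suc m) * r)"
      for g'
      using less.prems k by (intro less.IH) auto
    have Yn: "Y n \<in> carrier_mat r r" using less.prems k n_def by auto
    have Mn: "vcats r (\<lambda>k. x k \<cdot>\<^sub>m Cc (k+1) n) (Suc m) \<in> carrier_mat (Suc m * r) r" for x
      using less.prems k n_def by (intro vcats_carrier_mat) auto
    show ?thesis unfolding k RHn.simps(2) Let_def n_def[symmetric]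
      using IH Yn Mn less.prems(2) unfolding n_def
      apply (intro carrier_matI)
      apply (simp_all add: Let_def)
      done
  qed
qed

lemma cross_block_carrier:
  "M \<in> carrier_mat (Suc k * r) r \<Longrightarrow>
   cross_block r k M \<in> carrier_mat (Suc (Suc (Suc k)) * r) (Suc (Suc (Suc k)) * r)"
  unfolding cross_block_def by (intro carrier_matI) auto

lemma sandwich_hcat_cross_block:
  assumes a: "a \<in> carrier_mat d (Suc k * r)"
    and Rm: "Rm \<in> carrier_mat d r" and Rn: "Rn \<in> carrier_mat d r"
    and M: "M \<in> carrier_mat (Suc k * r) r"
  shows "hcat (hcat a Rm) Rn * cross_block r k M * transpose_mat (hcat (hcat a Rm) Rn)
    = hcat a Rm * (vcat M (0\<^sub>m r r) - vcat (0\<^sub>m r r) M) * transpose_mat (Rm - Rn)"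
proof -
  define U where "U = vcat M (0\<^sub>m r r) - vcat (0\<^sub>m r r) M"
  have U: "U \<in> carrier_mat (Suc k * r + r) r"
    unfolding U_def using M by (intro minus_carrier_mat carrier_matI) auto
  have U': "vcat (0\<^sub>m r r) M - vcat M (0\<^sub>m r r) = (-1) \<cdot>\<^sub>m U"
    unfolding U_def using M by (intro eq_matI) auto
  have aRm: "hcat a Rm \<in> carrier_mat d (Suc k * r + r)"
    using a Rm by simp
  have "cross_block r k M
    = vcat (hcat (hcat (0\<^sub>m (Suc k * r + r) (Suc k * r)) U) ((-1) \<cdot>\<^sub>m U))
      (0\<^sub>m r (Suc k * r + r + r))"
  proof -
    have e: "Suc (Suc k) * r = Suc k * r + r" "Suc (Suc (Suc k)) * r = Suc k * r + r + r"
      by simp_all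
    show ?thesis
      unfolding cross_block_def e U'[symmetric] unfolding U_def ..
  qed
  then have "hcat (hcat a Rm) Rn * cross_block r k M * transpose_mat (hcat (hcat a Rm) Rn)
      = hcat a Rm * U * transpose_mat Rm + hcat a Rm * ((-1) \<cdot>\<^sub>m U) * transpose_mat Rn"
    using sandwich_hcat_upper_rows[OF a Rm Rn U] U by simp
  also have "\<dots> = hcat a Rm * U * transpose_mat (Rm - Rn)"
  proof -
    note cars = aRm U Rm Rn
    note dims = cars[THEN carrier_matD(1)] cars[THEN carrier_matD(2)]
    show ?thesis
      apply (simp only: mat_expand_simps mat_dim_simps dims simp_thms)
      apply (rule eq_matI)
       apply (simp_all only: mat_entry_simps mat_dim_simps dims)
      done
  qed
  finally show ?thesis
    unfolding U_def .
qed

lemma sqrt_neg_mult: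
  assumes "a < 0" "b < (0::real)"
  shows "sqrt (- 2 * a) * sqrt (- 2 * b) = 2 * sqrt (a * b)"
proof -
  have "sqrt (- 2 * a) * sqrt (- 2 * b) = sqrt (4 * (a * b))"
    by (simp add: real_sqrt_mult[symmetric] algebra_simps)
  also have "\<dots> = 2 * sqrt (a * b)"
    by (simp add: real_sqrt_mult)
  finally show ?thesis .
qed

lemma sum_merge_last:
  "1 \<le> m \<Longrightarrow> (\<Sum>i=1..m. (g(m := g m + g (Suc m))) i) = (\<Sum>i=1..Suc m. g i)"
proof -
  assume "1 \<le> m"
  have "(\<Sum>i=1..m. (g(m := g m + g (Suc m))) i) = (\<Sum>i=1..m. g i + (if i = m then g (Suc m) else 0))"
    by (rule sum.cong) auto
  also have "\<dots> = (\<Sum>i=1..Suc m. g i)"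
    using \<open>1 \<le> m\<close> by (simp add: sum.distrib)
  finally show ?thesis .
qed

section \<open>The RADI iteration\<close>

locale radi_iteration =
  fixes A E B C H T :: "real mat" and d p q r n :: nat
    and X R V Yt :: "nat \<Rightarrow> real mat" and \<sigma> :: "nat \<Rightarrow> real"
  assumes A: "A \<in> carrier_mat d d" and E: "E \<in> carrier_mat d d"
    and B: "B \<in> carrier_mat d p" and C: "C \<in> carrier_mat q d"
    and H: "H \<in> carrier_mat p p" and H_sym: "transpose_mat H = H"
    and H_pd: "\<forall>x \<in> carrier_vec p. x \<noteq> 0\<^sub>v p \<longrightarrow> x \<bullet> (H *\<^sub>v x) > 0"
    and T: "T \<in> carrier_mat r r" and T_sym: "transpose_mat T = T"
    and X1: "\<exists>k Z1 D1. Z1 \<in> carrier_mat d k \<and> D1 \<in> carrier_mat k k \<and> transpose_mat D1 = D1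
               \<and> X 1 = Z1 * D1 * transpose_mat Z1"
    and R1: "R 1 \<in> carrier_mat d r"
    and res1: "riccati A E B C H (X 1) = R 1 * T * transpose_mat (R 1)"
    and n: "n \<ge> 2"
    and shifts: "\<forall>i\<in>{1..<n}. \<sigma> i < 0"
    and K_inv: "\<forall>i\<in>{1..<n}. invertible_mat
                  (transpose_mat A - transpose_mat E * X i * B * minv H * transpose_mat B
                   + \<sigma> i \<cdot>\<^sub>m transpose_mat E)"
    and V_def: "\<forall>i\<in>{1..<n}. V (Suc i) = sqrt (- 2 * \<sigma> i) \<cdot>\<^sub>m
                  (minv (transpose_mat A - transpose_mat E * X i * B * minv H * transpose_mat B
                         + \<sigma> i \<cdot>\<^sub>m transpose_mat E) * R i * T)"
    and Y_def: "\<forall>i\<in>{1..<n}. Yt (Suc i) = T - (1 / (2 * \<sigma> i)) \<cdot>\<^sub>m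
                  ((transpose_mat (V (Suc i)) * B) * minv H
                    * transpose_mat (transpose_mat (V (Suc i)) * B))"
    and Y_inv: "\<forall>i\<in>{1..<n}. invertible_mat (Yt (Suc i))"
    and X_def: "\<forall>i\<in>{1..<n}. X (Suc i)
      = X i + V (Suc i) * minv (Yt (Suc i)) * transpose_mat (V (Suc i))"
    and R_def: "\<forall>i\<in>{1..<n}. R (Suc i) = R i + sqrt (- 2 * \<sigma> i) \<cdot>\<^sub>m
                  (transpose_mat E * V (Suc i) * minv (Yt (Suc i)))"
begin

definition K :: "nat \<Rightarrow> real mat" where
  "K i = transpose_mat A - transpose_mat E * X i * B * minv H * transpose_mat B
    + \<sigma> i \<cdot>\<^sub>m transpose_mat E"

definition Delta :: "nat \<Rightarrow> real mat" where
  "Delta i = V (Suc i) * minv (Yt (Suc i)) * transpose_mat (V (Suc i))"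

definition Rstep :: "nat \<Rightarrow> real mat" where
  "Rstep i = transpose_mat E * V (Suc i) * minv (Yt (Suc i))"

abbreviation CC :: "nat \<Rightarrow> nat \<Rightarrow> real mat" where
  "CC \<equiv> \<lambda>i j. transpose_mat (V i) * B * minv H * transpose_mat B * V j"

lemma minv_H_carrier: "minv H \<in> carrier_mat p p"
  and minv_H_sym: "transpose_mat (minv H) = minv H"
proof -
  note U = minv_unit[OF H pos_def_unit[OF H H_pd, where b = "()"]]
  show "minv H \<in> carrier_mat p p"
    using U by auto
  show "transpose_mat (minv H) = minv H"
    using inverse_of_symmetric[OF H U(3) U(1) U(2) H_sym] .
qed

lemma X1_carrier: "X 1 \<in> carrier_mat d d"
  and X1_sym: "transpose_mat (X 1) = X 1"
proof -
  obtain k Z1 D1 where Z: "Z1 \<in> carrier_mat d k" "D1 \<in> carrier_mat k k" "transpose_mat D1 = D1"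
    "X 1 = Z1 * D1 * transpose_mat Z1"
    using X1 by blast
  note dims = Z(1,2)[THEN carrier_matD(1)] Z(1,2)[THEN carrier_matD(2)]
  show "X 1 \<in> carrier_mat d d"
    using Z by auto
  show "transpose_mat (X 1) = X 1"
    unfolding Z(4)
    by (simp only: mat_expand_simps mat_dim_simps dims simp_thms transpose_transpose Z(3))
qed

lemma V_step:
  assumes i: "i \<in> {1..<n}" and Xi: "X i \<in> carrier_mat d d" and Ri: "R i \<in> carrier_mat d r"
  shows "V (Suc i) \<in> carrier_mat d r" "K i * V (Suc i) = sqrt (- 2 * \<sigma> i) \<cdot>\<^sub>m (R i * T)"
proof -
  have Kc: "K i \<in> carrier_mat d d"
    unfolding K_def using A E B Xi minv_H_carrier by auto
  have "invertible_mat (K i)"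
    using K_inv i unfolding K_def by auto
  note KI = minv_invertible[OF Kc this]
  have Vd: "V (Suc i) = sqrt (- 2 * \<sigma> i) \<cdot>\<^sub>m (minv (K i) * R i * T)"
    using V_def i unfolding K_def by auto
  show "V (Suc i) \<in> carrier_mat d r"
    unfolding Vd using KI Ri T by auto
  note dims = Kc[THEN carrier_matD(1)] Kc[THEN carrier_matD(2)] KI(3)[THEN carrier_matD(1)]
    KI(3)[THEN carrier_matD(2)] Ri[THEN carrier_matD(1)] Ri[THEN carrier_matD(2)]
    T[THEN carrier_matD(1)] T[THEN carrier_matD(2)]
  have "K i * V (Suc i) = sqrt (- 2 * \<sigma> i) \<cdot>\<^sub>m (K i * minv (K i) * (R i * T))"
    unfolding Vd by (simp only: mat_expand_simps mat_dim_simps dims simp_thms)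
  then show "K i * V (Suc i) = sqrt (- 2 * \<sigma> i) \<cdot>\<^sub>m (R i * T)"
    using KI Ri T by simp
qed

lemma Yt_step:
  assumes i: "i \<in> {1..<n}" and Vc: "V (Suc i) \<in> carrier_mat d r"
  shows "Yt (Suc i) \<in> carrier_mat r r" "minv (Yt (Suc i)) \<in> carrier_mat r r"
    "Yt (Suc i) * minv (Yt (Suc i)) = 1\<^sub>m r" "transpose_mat (minv (Yt (Suc i))) = minv (Yt (Suc i))"
    "CC (Suc i) (Suc i) = (2 * \<sigma> i) \<cdot>\<^sub>m (T - Yt (Suc i))"
proof -
  note dims = Vc[THEN carrier_matD(1)] Vc[THEN carrier_matD(2)] B[THEN carrier_matD(1)]
    B[THEN carrier_matD(2)]
    minv_H_carrier[THEN carrier_matD(1)] minv_H_carrier[THEN carrier_matD(2)]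
    T[THEN carrier_matD(1)] T[THEN carrier_matD(2)]
  have Yd: "Yt (Suc i) = T - (1 / (2 * \<sigma> i)) \<cdot>\<^sub>m
              ((transpose_mat (V (Suc i)) * B) * minv H
                * transpose_mat (transpose_mat (V (Suc i)) * B))"
    using Y_def i by auto
  show Yc: "Yt (Suc i) \<in> carrier_mat r r"
    unfolding Yd using Vc B minv_H_carrier T by auto
  have Ys: "transpose_mat (Yt (Suc i)) = Yt (Suc i)"
    unfolding Yd
    by (simp only: mat_expand_simps mat_dim_simps dims simp_thms transpose_transpose T_sym minv_H_sym)
  have "invertible_mat (Yt (Suc i))"
    using Y_inv i by auto
  note YI = minv_invertible[OF Yc this]
  show "minv (Yt (Suc i)) \<in> carrier_mat r r" "Yt (Suc i) * minv (Yt (Suc i)) = 1\<^sub>m r"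
    using YI by auto
  show "transpose_mat (minv (Yt (Suc i))) = minv (Yt (Suc i))"
    using inverse_of_symmetric[OF Yc YI(3) YI(1) YI(2) Ys] .
  have "\<sigma> i \<noteq> 0"
    using shifts i by force
  then show "CC (Suc i) (Suc i) = (2 * \<sigma> i) \<cdot>\<^sub>m (T - Yt (Suc i))"
    unfolding Yd
    apply (simp only: mat_expand_simps mat_dim_simps dims simp_thms transpose_transpose)
    apply (rule eq_matI)
     apply (simp_all only: mat_entry_simps mat_dim_simps dims)
    apply simp
    done
qed

lemma iterates_carrier:
  assumes "i \<in> {1..n}"
  shows "X i \<in> carrier_mat d d \<and> transpose_mat (X i) = X i \<and> R i \<in> carrier_mat d r"
  using assms
proof (induction i)
  case (Suc i)
  show ?case
  proof (cases "i = 0")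
    case True
    then show ?thesis
      using X1_carrier X1_sym R1 by simp
  next
    case False
    then have i: "i \<in> {1..<n}"
      using Suc.prems by auto
    then have Xi: "X i \<in> carrier_mat d d" "transpose_mat (X i) = X i"
      and Ri: "R i \<in> carrier_mat d r"
      using Suc.IH by auto
    note Vc = V_step(1)[OF i Xi(1) Ri] and Y = Yt_step[OF i Vc]
    note dims = Vc[THEN carrier_matD(1)] Vc[THEN carrier_matD(2)] Xi(1)[THEN carrier_matD(1)]
      Xi(1)[THEN carrier_matD(2)] Y(2)[THEN carrier_matD(1)] Y(2)[THEN carrier_matD(2)]
    have Xd: "X (Suc i) = X i + V (Suc i) * minv (Yt (Suc i)) * transpose_mat (V (Suc i))"
      using X_def i by auto
    have Rd: "R (Suc i)
      = R i + sqrt (- 2 * \<sigma> i) \<cdot>\<^sub>m (transpose_mat E * V (Suc i) * minv (Yt (Suc i)))"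
      using R_def i by auto
    have "transpose_mat (X (Suc i)) = X (Suc i)"
      unfolding Xd
      by (simp only: mat_expand_simps mat_dim_simps dims simp_thms transpose_transpose Xi(2) Y(4))
    moreover have "X (Suc i) \<in> carrier_mat d d" "R (Suc i) \<in> carrier_mat d r"
      unfolding Xd Rd using Xi Ri Vc Y E by auto
    ultimately show ?thesis
      by simp
  qed
qed simp

lemma X_carrier: "i \<in> {1..n} \<Longrightarrow> X i \<in> carrier_mat d d"
  and X_sym: "i \<in> {1..n} \<Longrightarrow> transpose_mat (X i) = X i"
  and R_carrier: "i \<in> {1..n} \<Longrightarrow> R i \<in> carrier_mat d r"
  using iterates_carrier by auto

lemma
  assumes i: "i \<in> {1..<n}"
  shows V_carrier: "V (Suc i) \<in> carrier_mat d r"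
    and K_mult_V: "K i * V (Suc i) = sqrt (- 2 * \<sigma> i) \<cdot>\<^sub>m (R i * T)"
    and Yt_carrier: "Yt (Suc i) \<in> carrier_mat r r"
    and minv_Yt_carrier: "minv (Yt (Suc i)) \<in> carrier_mat r r"
    and Yt_mult_minv: "Yt (Suc i) * minv (Yt (Suc i)) = 1\<^sub>m r"
    and minv_Yt_sym: "transpose_mat (minv (Yt (Suc i))) = minv (Yt (Suc i))"
    and CC_diag: "CC (Suc i) (Suc i) = (2 * \<sigma> i) \<cdot>\<^sub>m (T - Yt (Suc i))"
proof -
  have "i \<in> {1..n}"
    using i by auto
  note step = V_step[OF i X_carrier[OF this] R_carrier[OF this]]
  show "V (Suc i) \<in> carrier_mat d r" "K i * V (Suc i) = sqrt (- 2 * \<sigma> i) \<cdot>\<^sub>m (R i * T)"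
    using step by auto
  note Y = Yt_step[OF i step(1)]
  show "Yt (Suc i) \<in> carrier_mat r r" "minv (Yt (Suc i)) \<in> carrier_mat r r"
    "Yt (Suc i) * minv (Yt (Suc i)) = 1\<^sub>m r" "transpose_mat (minv (Yt (Suc i))) = minv (Yt (Suc i))"
    "CC (Suc i) (Suc i) = (2 * \<sigma> i) \<cdot>\<^sub>m (T - Yt (Suc i))"
    using Y by auto
qed

lemma
  assumes i: "i \<in> {1..<n}"
  shows Delta_carrier: "Delta i \<in> carrier_mat d d"
    and Rstep_carrier: "Rstep i \<in> carrier_mat d r"
    and X_Suc: "X (Suc i) = X i + Delta i"
    and R_Suc: "R (Suc i) = R i + sqrt (- 2 * \<sigma> i) \<cdot>\<^sub>m Rstep i"
  unfolding Delta_def Rstep_def using V_carrier[OF i] minv_Yt_carrier[OF i] E X_def R_def i by auto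

lemma Yt_carrier_2: "i \<in> {2..n} \<Longrightarrow> Yt i \<in> carrier_mat r r"
  using Yt_carrier[of "i - 1"] by (cases i) auto

lemma CC_carrier: "i \<in> {2..n} \<Longrightarrow> j \<in> {2..n} \<Longrightarrow> CC i j \<in> carrier_mat r r"
  using V_carrier[of "i - 1"] V_carrier[of "j - 1"] B minv_H_carrier
  by (cases i; cases j) (auto intro!: mult_carrier_mat)

lemma RHn_radi_carrier: "2 \<le> m \<Longrightarrow> m \<le> n \<Longrightarrow> RHn r T Yt CC \<sigma> m g \<in> carrier_mat (m * r) (m * r)"
  by (rule RHn_carrier) (use T Yt_carrier_2 CC_carrier in auto)

lemma hcats_R_carrier: "m \<le> n \<Longrightarrow> hcats d R m \<in> carrier_mat d (m * r)"
  by (rule hcats_carrier_mat) (use R_carrier in auto)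

lemma cross_col_carrier:
  "Suc (Suc (Suc k)) \<le> n \<Longrightarrow> cross_col r CC \<sigma> k g \<in> carrier_mat (Suc k * r) r"
  unfolding cross_col_def by (rule vcats_carrier_mat) (use CC_carrier in auto)

lemma weighted_sum_sym:
  assumes I: "I \<subseteq> {1..n}"
  shows "transpose_mat (msum d (\<lambda>i. c i \<cdot>\<^sub>m X i) I) = msum d (\<lambda>i. c i \<cdot>\<^sub>m X i) I"
proof (rule eq_matI)
  fix a b
  assume "a < dim_row (msum d (\<lambda>i. c i \<cdot>\<^sub>m X i) I)"
    "b < dim_col (msum d (\<lambda>i. c i \<cdot>\<^sub>m X i) I)"
  then have ab: "a < d" "b < d"
    by auto
  have Xc: "\<And>i. i \<in> I \<Longrightarrow> X i \<in> carrier_mat d d"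
    using X_carrier I by auto
  have "(\<Sum>i\<in>I. c i * X i $$ (b,a)) = (\<Sum>i\<in>I. c i * X i $$ (a,b))"
  proof (rule sum.cong[OF refl])
    fix i assume i: "i \<in> I"
    have "X i $$ (b,a) = transpose_mat (X i) $$ (a,b)"
      using Xc[OF i] ab by simp
    then show "c i * X i $$ (b,a) = c i * X i $$ (a,b)"
      using X_sym I i by auto
  qed
  then show "transpose_mat (msum d (\<lambda>i. c i \<cdot>\<^sub>m X i) I) $$ (a,b)
    = msum d (\<lambda>i. c i \<cdot>\<^sub>m X i) I $$ (a,b)"
    using ab index_msum_smult[OF Xc] by simp
qed auto

lemma weighted_sum_merge_last:
  assumes m: "m \<in> {1..<n}"
  shows "msum d (\<lambda>i. g i \<cdot>\<^sub>m X i) {1..Suc m}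
    = msum d (\<lambda>i. (g(m := g m + g (Suc m))) i \<cdot>\<^sub>m X i) {1..m} + g (Suc m) \<cdot>\<^sub>m Delta m"
proof (rule eq_matI)
  have D: "Delta m \<in> carrier_mat d d"
    using Delta_carrier[OF m] .
  fix a b
  assume "a < dim_row (msum d (\<lambda>i. (g(m := g m + g (Suc m))) i \<cdot>\<^sub>m X i) {1..m} + g (Suc m) \<cdot>\<^sub>m Delta m)"
    "b < dim_col (msum d (\<lambda>i. (g(m := g m + g (Suc m))) i \<cdot>\<^sub>m X i) {1..m} + g (Suc m) \<cdot>\<^sub>m Delta m)"
  then have ab: "a < d" "b < d"
    using D by auto
  have Xc: "\<And>i. i \<in> {1..Suc m} \<Longrightarrow> X i \<in> carrier_mat d d"
    using X_carrier m by auto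
  have "(\<Sum>i=1..m. (g(m := g m + g (Suc m))) i * X i $$ (a,b))
    = (\<Sum>i=1..m. g i * X i $$ (a,b) + (if i = m then g (Suc m) * X m $$ (a,b) else 0))"
    by (rule sum.cong) (auto simp: algebra_simps)
  also have "\<dots> = (\<Sum>i=1..m. g i * X i $$ (a,b)) + g (Suc m) * X m $$ (a,b)"
    using m by (simp add: sum.distrib)
  finally have merged: "(\<Sum>i=1..m. (g(m := g m + g (Suc m))) i * X i $$ (a,b)) = \<dots>" .
  have "X (Suc m) $$ (a,b) = X m $$ (a,b) + Delta m $$ (a,b)"
    using X_Suc[OF m] D ab by simp
  with merged show "msum d (\<lambda>i. g i \<cdot>\<^sub>m X i) {1..Suc m} $$ (a,b)
    = (msum d (\<lambda>i. (g(m := g m + g (Suc m))) i \<cdot>\<^sub>m X i) {1..m} + g (Suc m) \<cdot>\<^sub>m Delta m) $$ (a,b)"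
    using ab D index_msum_smult[of "{1..Suc m}" X, OF Xc] index_msum_smult[of "{1..m}" X, OF Xc]
    by (simp add: algebra_simps)
qed (use Delta_carrier[OF assms] in auto)

lemma X_sub_weighted_sum_entry:
  assumes "m \<in> {1..n}" "a < d" "b < d"
  shows "(\<Sum>i=1..m. h i) * X m $$ (a,b) - (\<Sum>i=1..m. h i * X i $$ (a,b)) =
    (\<Sum>k=1..m-1. (\<Sum>j=1..k. h j) * Delta k $$ (a,b))"
  using assms
proof (induction m)
  case (Suc m)
  show ?case
  proof (cases "m = 0")
    case False
    then have m: "m \<in> {1..<n}"
      using Suc.prems by auto
    have "X (Suc m) $$ (a,b) = X m $$ (a,b) + Delta m $$ (a,b)"
      using X_Suc[OF m] Delta_carrier[OF m] Suc.prems by simp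
    moreover obtain m' where "m = Suc m'"
      using False by (cases m) auto
    ultimately show ?thesis
      using Suc m by (simp add: algebra_simps)
  qed simp
qed simp

lemma X_sub_weighted_sum:
  assumes m: "m \<in> {1..n}"
  shows "(\<Sum>i=1..m. h i) \<cdot>\<^sub>m X m - msum d (\<lambda>i. h i \<cdot>\<^sub>m X i) {1..m} =
    sum_upto_mat d d (\<lambda>k. (\<Sum>j=1..k. h j) \<cdot>\<^sub>m Delta k) (m-1)"
proof -
  have D: "\<And>k. k \<in> {1..m-1} \<Longrightarrow> (\<Sum>j=1..k. h j) \<cdot>\<^sub>m Delta k \<in> carrier_mat d d"
    using Delta_carrier m by auto
  have Xc: "\<And>i. i \<in> {1..m} \<Longrightarrow> X i \<in> carrier_mat d d"
    using X_carrier m by auto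
  have S: "sum_upto_mat d d (\<lambda>k. (\<Sum>j=1..k. h j) \<cdot>\<^sub>m Delta k) (m-1) \<in> carrier_mat d d"
    by (rule sum_upto_mat_carrier[OF D])
  show ?thesis
  proof (rule eq_matI)
    fix a b assume "a < dim_row (sum_upto_mat d d (\<lambda>k. (\<Sum>j=1..k. h j) \<cdot>\<^sub>m Delta k) (m-1))"
      "b < dim_col (sum_upto_mat d d (\<lambda>k. (\<Sum>j=1..k. h j) \<cdot>\<^sub>m Delta k) (m-1))"
    then have ab: "a < d" "b < d"
      using S by auto
    have entries: "(\<Sum>k=1..m-1. (\<Sum>j=1..k. h j) * Delta k $$ (a,b))
        = (\<Sum>k=1..m-1. ((\<Sum>j=1..k. h j) \<cdot>\<^sub>m Delta k) $$ (a,b))"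
    proof (rule sum.cong[OF refl])
      fix k assume "k \<in> {1..m-1}"
      then have "Delta k \<in> carrier_mat d d"
        using Delta_carrier m by auto
      then show "(\<Sum>j=1..k. h j) * Delta k $$ (a,b) = ((\<Sum>j=1..k. h j) \<cdot>\<^sub>m Delta k) $$ (a,b)"
        using ab by simp
    qed
    show "((\<Sum>i=1..m. h i) \<cdot>\<^sub>m X m - msum d (\<lambda>i. h i \<cdot>\<^sub>m X i) {1..m}) $$ (a,b)
      = sum_upto_mat d d (\<lambda>k. (\<Sum>j=1..k. h j) \<cdot>\<^sub>m Delta k) (m-1) $$ (a,b)"
    proof -
      have "msum d (\<lambda>i. h i \<cdot>\<^sub>m X i) {1..m} $$ (a,b) = (\<Sum>i=1..m. h i * X i $$ (a,b))"
        by (rule index_msum_smult[OF Xc ab])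
      moreover have "sum_upto_mat d d (\<lambda>k. (\<Sum>j=1..k. h j) \<cdot>\<^sub>m Delta k) (m-1) $$ (a,b)
          = (\<Sum>k=1..m-1. ((\<Sum>j=1..k. h j) \<cdot>\<^sub>m Delta k) $$ (a,b))"
        by (rule index_sum_upto_mat[OF D ab])
      ultimately show ?thesis
        using X_sub_weighted_sum_entry[OF m ab] Xc[of m] m ab entries by simp
    qed
  qed (use S in auto)
qed

lemma riccati_merge_last:
  fixes g :: "nat \<Rightarrow> real"
  assumes m: "m \<in> {1..<n}"
  defines "Xp \<equiv> msum d (\<lambda>i. (g(m := g m + g (Suc m))) i \<cdot>\<^sub>m X i) {1..m}"
  shows "riccati A E B C H (msum d (\<lambda>i. g i \<cdot>\<^sub>m X i) {1..Suc m})
     = riccati A E B C H Xp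
       + (g (Suc m) * sqrt (- 2 * \<sigma> m)) \<cdot>\<^sub>m
         (R m * T * transpose_mat (Rstep m) + Rstep m * T * transpose_mat (R m))
       - (2 * g (Suc m) * \<sigma> m) \<cdot>\<^sub>m (Rstep m * Yt (Suc m) * transpose_mat (Rstep m))
       - (2 * g (Suc m) * g (Suc m) * \<sigma> m) \<cdot>\<^sub>m
         (Rstep m * (T - Yt (Suc m)) * transpose_mat (Rstep m))
       + g (Suc m) \<cdot>\<^sub>m (transpose_mat E * (X m - Xp) * B * minv H * transpose_mat B * Delta m * E
           + transpose_mat
             (transpose_mat E * (X m - Xp) * B * minv H * transpose_mat B * Delta m * E))"
proof -
  have m1: "m \<in> {1..n}"
    using m by auto
  have Xp: "Xp \<in> carrier_mat d d" "transpose_mat Xp = Xp"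
    unfolding Xp_def using weighted_sum_sym m by (auto intro: carrier_matI)
  have "\<sigma> m < 0"
    using shifts m by auto
  then have "sqrt (- 2 * \<sigma> m) * sqrt (- 2 * \<sigma> m) = - 2 * \<sigma> m"
    by simp
  from riccati_rank_update[OF A E B C minv_H_carrier minv_H_sym Xp X_carrier[OF m1] X_sym[OF m1]
      V_carrier[OF m] minv_Yt_carrier[OF m] minv_Yt_sym[OF m] Yt_carrier[OF m] T T_sym R_carrier[OF m1]
      refl K_mult_V[OF m, unfolded K_def] CC_diag[OF m] Yt_mult_minv[OF m] this]
  show ?thesis
    unfolding weighted_sum_merge_last[OF m] Xp_def[symmetric] Delta_def Rstep_def .
qed

lemma hcats_R_mult_cross_diff:
  assumes k: "Suc (Suc (Suc k)) \<le> n"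
  shows "hcats d R (Suc (Suc k))
    * (vcat (cross_col r CC \<sigma> k g) (0\<^sub>m r r) - vcat (0\<^sub>m r r) (cross_col r CC \<sigma> k g))
    = sum_upto_mat d r (\<lambda>i. (- (sqrt (- 2 * \<sigma> i) * cross_weight \<sigma> g k i))
        \<cdot>\<^sub>m (Rstep i * CC (Suc i) (Suc (Suc (Suc k))))) (Suc k)"
proof -
  let ?N = "Suc (Suc (Suc k))"
  have G: "\<And>i. i \<in> {1..Suc k} \<Longrightarrow> cross_weight \<sigma> g k i \<cdot>\<^sub>m CC (Suc i) ?N \<in> carrier_mat r r"
    using CC_carrier k by auto
  have "hcats d R (Suc (Suc k))
    * (vcat (cross_col r CC \<sigma> k g) (0\<^sub>m r r) - vcat (0\<^sub>m r r) (cross_col r CC \<sigma> k g))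
    = sum_upto_mat d r (\<lambda>i. (R i - R (Suc i)) * (cross_weight \<sigma> g k i \<cdot>\<^sub>m CC (Suc i) ?N)) (Suc k)"
    unfolding cross_col_def by (rule hcats_mult_vcats_shift_diff[OF _ G]) (use R_carrier k in auto)
  also have "\<dots> = sum_upto_mat d r (\<lambda>i. (- (sqrt (- 2 * \<sigma> i) * cross_weight \<sigma> g k i))
        \<cdot>\<^sub>m (Rstep i * CC (Suc i) ?N)) (Suc k)"
  proof (rule sum_upto_mat_cong)
    fix i assume "i \<in> {1..Suc k}"
    then have i: "i \<in> {1..<n}" and i1: "i \<in> {1..n}"
      using k by auto
    have "(R i - R (Suc i)) * (cross_weight \<sigma> g k i \<cdot>\<^sub>m Q)
      = (- (sqrt (- 2 * \<sigma> i) * cross_weight \<sigma> g k i)) \<cdot>\<^sub>m (Rstep i * Q)"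
      if Q: "Q \<in> carrier_mat r r" for Q
    proof -
      have cars: "R i \<in> carrier_mat d r" "Rstep i \<in> carrier_mat d r" "Q \<in> carrier_mat r r"
        using R_carrier[OF i1] Rstep_carrier[OF i] Q by auto
      note dims = cars[THEN carrier_matD(1)] cars[THEN carrier_matD(2)]
      show ?thesis
        unfolding R_Suc[OF i]
        apply (simp only: mat_expand_simps mat_dim_simps dims simp_thms)
        apply (rule eq_matI)
         apply (simp_all only: mat_entry_simps mat_dim_simps dims)
        apply (simp add: algebra_simps)
        done
    qed
    then show "(R i - R (Suc i)) * (cross_weight \<sigma> g k i \<cdot>\<^sub>m CC (Suc i) ?N)
      = (- (sqrt (- 2 * \<sigma> i) * cross_weight \<sigma> g k i)) \<cdot>\<^sub>m (Rstep i * CC (Suc i) ?N)"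
      using CC_carrier k i by simp
  qed
  finally show ?thesis .
qed

lemma sandwich_cross_block:
  assumes k: "Suc (Suc (Suc k)) \<le> n"
  defines "m \<equiv> Suc (Suc k)"
  shows "hcats d R (Suc m) * cross_block r k (cross_col r CC \<sigma> k g)
    * transpose_mat (hcats d R (Suc m))
    = sum_upto_mat d d (\<lambda>i. (sqrt (- 2 * \<sigma> m) * sqrt (- 2 * \<sigma> i) * cross_weight \<sigma> g k i)
        \<cdot>\<^sub>m (Rstep i * CC (Suc i) (Suc m) * transpose_mat (Rstep m))) (Suc k)"
proof -
  define F where "F = (\<lambda>i. (- (sqrt (- 2 * \<sigma> i) * cross_weight \<sigma> g k i)) \<cdot>\<^sub>m (Rstep i * CC (Suc i) (Suc m)))"
  have hm: "m \<in> {1..<n}" "m \<in> {1..n}" "Suc m \<in> {1..n}"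
    using k unfolding m_def by auto
  have Fc: "F i \<in> carrier_mat d r" if "i \<in> {1..Suc k}" for i
  proof -
    have "Rstep i \<in> carrier_mat d r" "CC (Suc i) (Suc m) \<in> carrier_mat r r"
      using that Rstep_carrier CC_carrier k unfolding m_def by auto
    then show ?thesis
      unfolding F_def by (rule smult_carrier_mat[OF mult_carrier_mat])
  qed
  have Rs: "transpose_mat ((- sqrt (- 2 * \<sigma> m)) \<cdot>\<^sub>m Rstep m) \<in> carrier_mat r d"
    using Rstep_carrier[OF hm(1)] by simp
  have Rdiff: "R m - R (Suc m) = (- sqrt (- 2 * \<sigma> m)) \<cdot>\<^sub>m Rstep m"
    unfolding R_Suc[OF hm(1)] using R_carrier[OF hm(2)] Rstep_carrier[OF hm(1)]
    by (intro eq_matI) auto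
  have hk: "hcats d R (Suc k) \<in> carrier_mat d (Suc k * r)"
    using k by (intro hcats_R_carrier) simp
  have hcatsN: "hcats d R (Suc m) = hcat (hcat (hcats d R (Suc k)) (R m)) (R (Suc m))"
    and hcatsm: "hcat (hcats d R (Suc k)) (R m) = hcats d R m"
    unfolding m_def by simp_all
  have "hcats d R (Suc m) * cross_block r k (cross_col r CC \<sigma> k g)
    * transpose_mat (hcats d R (Suc m))
    = hcats d R m * (vcat (cross_col r CC \<sigma> k g) (0\<^sub>m r r) - vcat (0\<^sub>m r r) (cross_col r CC \<sigma> k g))
      * transpose_mat ((- sqrt (- 2 * \<sigma> m)) \<cdot>\<^sub>m Rstep m)"
    unfolding hcatsN
    unfolding sandwich_hcat_cross_block[OF hk R_carrier[OF hm(2)] R_carrier[OF hm(3)]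
      cross_col_carrier[OF k]]
    unfolding hcatsm Rdiff ..
  also have "\<dots> = sum_upto_mat d r F (Suc k) * transpose_mat ((- sqrt (- 2 * \<sigma> m)) \<cdot>\<^sub>m Rstep m)"
    unfolding F_def m_def by (subst hcats_R_mult_cross_diff[OF k]) (rule refl)
  also have "\<dots>
    = sum_upto_mat d d (\<lambda>i. F i * transpose_mat ((- sqrt (- 2 * \<sigma> m)) \<cdot>\<^sub>m Rstep m)) (Suc k)"
    by (rule sum_upto_mat_mult_right[OF Fc Rs])
  also have "\<dots> = sum_upto_mat d d (\<lambda>i. (sqrt (- 2 * \<sigma> m) * sqrt (- 2 * \<sigma> i) * cross_weight \<sigma> g k i)
        \<cdot>\<^sub>m (Rstep i * CC (Suc i) (Suc m) * transpose_mat (Rstep m))) (Suc k)"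
  proof (rule sum_upto_mat_cong)
    fix i
    have "dim_col (Rstep i * CC (Suc i) (Suc m)) = dim_col (Rstep m)"
      using V_carrier[OF hm(1)] Rstep_carrier[OF hm(1)] by simp
    then have "F i * transpose_mat ((- sqrt (- 2 * \<sigma> m)) \<cdot>\<^sub>m Rstep m)
      = ((- (sqrt (- 2 * \<sigma> i) * cross_weight \<sigma> g k i)) * (- sqrt (- 2 * \<sigma> m)))
        \<cdot>\<^sub>m (Rstep i * CC (Suc i) (Suc m) * transpose_mat (Rstep m))"
      unfolding F_def by (rule smult_mult_transpose_smult)
    then show "F i * transpose_mat ((- sqrt (- 2 * \<sigma> m)) \<cdot>\<^sub>m Rstep m)
      = (sqrt (- 2 * \<sigma> m) * sqrt (- 2 * \<sigma> i) * cross_weight \<sigma> g k i)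
        \<cdot>\<^sub>m (Rstep i * CC (Suc i) (Suc m) * transpose_mat (Rstep m))"
      by (simp add: algebra_simps)
  qed
  finally show ?thesis .
qed

lemma cross_term_expansion:
  fixes g :: "nat \<Rightarrow> real"
  assumes k: "Suc (Suc (Suc k)) \<le> n" and g: "(\<Sum>i=1..Suc (Suc (Suc k)). g i) = 1"
  defines "m \<equiv> Suc (Suc k)"
  shows "transpose_mat E * (X m - msum d (\<lambda>i. (g(m := g m + g (Suc m))) i \<cdot>\<^sub>m X i) {1..m})
           * B * minv H * transpose_mat B * Delta m * E
    = sum_upto_mat d d
      (\<lambda>i. sum g {1..i} \<cdot>\<^sub>m (Rstep i * CC (Suc i) (Suc m) * transpose_mat (Rstep m))) (Suc k)"
proof -
  define g' where "g' = g(m := g m + g (Suc m))"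
  define M0 where "M0 = B * minv H * transpose_mat B * Delta m * E"
  have hm: "m \<in> {1..<n}" "m \<in> {1..n}"
    using k unfolding m_def by auto
  have D: "\<And>i. i \<in> {1..Suc k} \<Longrightarrow> sum g' {1..i} \<cdot>\<^sub>m Delta i \<in> carrier_mat d d"
    using Delta_carrier k by auto
  have M0: "M0 \<in> carrier_mat d d"
    unfolding M0_def using B minv_H_carrier Delta_carrier[OF hm(1)] E by auto
  have "X m - msum d (\<lambda>i. g' i \<cdot>\<^sub>m X i) {1..m}
    = sum_upto_mat d d (\<lambda>i. sum g' {1..i} \<cdot>\<^sub>m Delta i) (Suc k)"
  proof -
    have "(\<Sum>i=1..m. g' i) = 1"
      unfolding g'_def using sum_merge_last[of m g] g unfolding m_def by simp
    moreover have "1 \<cdot>\<^sub>m X m = X m"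
      by (rule eq_matI) auto
    moreover have "m - 1 = Suc k"
      unfolding m_def by simp
    ultimately show ?thesis
      using X_sub_weighted_sum[OF hm(2), of g'] by simp
  qed
  then have "transpose_mat E * (X m - msum d (\<lambda>i. g' i \<cdot>\<^sub>m X i) {1..m}) * B * minv H
    * transpose_mat B * Delta m * E
      = transpose_mat E * sum_upto_mat d d (\<lambda>i. sum g' {1..i} \<cdot>\<^sub>m Delta i) (Suc k) * M0"
  proof -
    note cars = E B minv_H_carrier Delta_carrier[OF hm(1)] sum_upto_mat_carrier[OF D]
    note dims = cars[THEN carrier_matD(1)] cars[THEN carrier_matD(2)]
    assume "X m - msum d (\<lambda>i. g' i \<cdot>\<^sub>m X i) {1..m}
      = sum_upto_mat d d (\<lambda>i. sum g' {1..i} \<cdot>\<^sub>m Delta i) (Suc k)"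
    then show ?thesis
      unfolding M0_def by (simp only: mat_expand_simps mat_dim_simps dims simp_thms)
  qed
  also have "\<dots> = sum_upto_mat d d (\<lambda>i. transpose_mat E * (sum g' {1..i} \<cdot>\<^sub>m Delta i) * M0) (Suc k)"
    by (rule sum_upto_mat_sandwich[OF D transpose_carrier_mat[THEN iffD2, OF E] M0])
  also have "\<dots>
    = sum_upto_mat d d
    (\<lambda>i. sum g {1..i} \<cdot>\<^sub>m (Rstep i * CC (Suc i) (Suc m) * transpose_mat (Rstep m))) (Suc k)"
  proof (rule sum_upto_mat_cong)
    fix i assume i0: "i \<in> {1..Suc k}"
    then have i: "i \<in> {1..<n}"
      using k by auto
    have "sum g' {1..i} = sum g {1..i}"
      unfolding g'_def using i0 by (intro sum.cong) (auto simp: m_def)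
    moreover
    note cars = E B minv_H_carrier V_carrier[OF hm(1)] minv_Yt_carrier[OF hm(1)] V_carrier[OF i]
      minv_Yt_carrier[OF i]
    note dims = cars[THEN carrier_matD(1)] cars[THEN carrier_matD(2)]
    have "transpose_mat E * (c \<cdot>\<^sub>m Delta i) * M0
      = c \<cdot>\<^sub>m (Rstep i * CC (Suc i) (Suc m) * transpose_mat (Rstep m))" for c
      unfolding M0_def Delta_def Rstep_def
      by (simp only: mat_expand_simps mat_dim_simps dims simp_thms transpose_transpose
        minv_Yt_sym[OF hm(1)])
    ultimately show "transpose_mat E * (sum g' {1..i} \<cdot>\<^sub>m Delta i) * M0
      = sum g {1..i} \<cdot>\<^sub>m (Rstep i * CC (Suc i) (Suc m) * transpose_mat (Rstep m))"
      by simp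
  qed
  finally show ?thesis
    unfolding g'_def .
qed

lemma sandwich_cross_block_eq:
  fixes g :: "nat \<Rightarrow> real"
  assumes k: "Suc (Suc (Suc k)) \<le> n" and g: "(\<Sum>i=1..Suc (Suc (Suc k)). g i) = 1"
  defines "m \<equiv> Suc (Suc k)"
  shows "hcats d R (Suc m) * cross_block r k (cross_col r CC \<sigma> k g)
    * transpose_mat (hcats d R (Suc m))
    = g (Suc m) \<cdot>\<^sub>m
      (transpose_mat E * (X m - msum d (\<lambda>i. (g(m := g m + g (Suc m))) i \<cdot>\<^sub>m X i) {1..m})
           * B * minv H * transpose_mat B * Delta m * E)"
proof -
  have F: "sum g {1..i} \<cdot>\<^sub>m (Rstep i * CC (Suc i) (Suc m) * transpose_mat (Rstep m))
    \<in> carrier_mat d d"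
    if "i \<in> {1..Suc k}" for i
  proof -
    have "Rstep i \<in> carrier_mat d r" "CC (Suc i) (Suc m) \<in> carrier_mat r r"
      "Rstep m \<in> carrier_mat d r"
      using that k Rstep_carrier CC_carrier unfolding m_def by auto
    then show ?thesis
      by (intro smult_carrier_mat) (meson mult_carrier_mat transpose_carrier_mat)
  qed
  have weight: "sqrt (- 2 * \<sigma> m) * sqrt (- 2 * \<sigma> i) * cross_weight \<sigma> g k i
    = g (Suc m) * sum g {1..i}"
    if "i \<in> {1..Suc k}" for i
  proof -
    have neg: "\<sigma> m < 0" "\<sigma> i < 0"
      using shifts that k unfolding m_def by auto
    then have "sqrt (\<sigma> i * \<sigma> m) > 0"
      by (simp add: mult_neg_neg)
    with sqrt_neg_mult[OF neg] neg show ?thesis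
      unfolding cross_weight_def m_def by (simp add: mult.commute)
  qed
  have distrib: "g (Suc m) \<cdot>\<^sub>m sum_upto_mat d d
    (\<lambda>i. sum g {1..i} \<cdot>\<^sub>m (Rstep i * CC (Suc i) (Suc m) * transpose_mat (Rstep m))) (Suc k)
    = sum_upto_mat d d
      (\<lambda>i. g (Suc m) \<cdot>\<^sub>m
      (sum g {1..i} \<cdot>\<^sub>m (Rstep i * CC (Suc i) (Suc m) * transpose_mat (Rstep m)))) (Suc k)"
    by (rule sum_upto_mat_smult) (rule F)
  show ?thesis
    unfolding sandwich_cross_block[OF k, folded m_def] cross_term_expansion[OF k g, folded m_def]
      distrib
    by (rule sum_upto_mat_cong) (simp only: smult_smult_mat weight)
qed

lemma sandwich_last_step_block:
  assumes k: "Suc (Suc (Suc k)) \<le> n"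
  defines "m \<equiv> Suc (Suc k)"
  shows "hcats d R (Suc m) * blkdiag (0\<^sub>m (Suc k * r) (Suc k * r)) (step_block c \<gamma> T (Yt (Suc m)))
      * transpose_mat (hcats d R (Suc m))
   = c \<cdot>\<^sub>m (R m * T * transpose_mat (R m))
     + (\<gamma> * sqrt (- 2 * \<sigma> m)) \<cdot>\<^sub>m
       (R m * T * transpose_mat (Rstep m) + Rstep m * T * transpose_mat (R m))
     - (2 * \<gamma> * \<sigma> m) \<cdot>\<^sub>m (Rstep m * Yt (Suc m) * transpose_mat (Rstep m))
     - (2 * \<gamma> * \<gamma> * \<sigma> m) \<cdot>\<^sub>m (Rstep m * (T - Yt (Suc m)) * transpose_mat (Rstep m))"
proof -
  have hm: "m \<in> {1..<n}" "m \<in> {1..n}"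
    using k unfolding m_def by auto
  have hk: "hcats d R (Suc k) \<in> carrier_mat d (Suc k * r)"
    using k by (intro hcats_R_carrier) simp
  have RR: "hcat (R m) (R m + sqrt (- 2 * \<sigma> m) \<cdot>\<^sub>m Rstep m) \<in> carrier_mat d (r + r)"
    using R_carrier[OF hm(2)] Rstep_carrier[OF hm(1)] by simp
  have "hcats d R (Suc m) = hcat (hcat (hcats d R (Suc k)) (R m)) (R (Suc m))"
    unfolding m_def by simp
  also have "\<dots> = hcat (hcats d R (Suc k)) (hcat (R m) (R (Suc m)))"
    using k by (intro hcat_assoc[OF hk R_carrier R_carrier]) (auto simp: m_def)
  finally have "hcats d R (Suc m)
    = hcat (hcats d R (Suc k)) (hcat (R m) (R m + sqrt (- 2 * \<sigma> m) \<cdot>\<^sub>m Rstep m))"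
    unfolding R_Suc[OF hm(1)] .
  moreover have "\<sigma> m < 0"
    using shifts hm by auto
  ultimately show ?thesis
    using sandwich_hcat_blkdiag_zero_left[OF hk RR step_block_carrier[OF T Yt_carrier[OF hm(1)]]]
      sandwich_step_block[OF R_carrier[OF hm(2)] Rstep_carrier[OF hm(1)] T Yt_carrier[OF hm(1)]]
    by simp
qed

lemma riccati_weighted_two:
  assumes g: "g 1 + g 2 = 1"
  shows "riccati A E B C H (msum d (\<lambda>i. g i \<cdot>\<^sub>m X i) {1..2})
    = hcats d R 2 * RHn r T Yt CC \<sigma> 2 g * transpose_mat (hcats d R 2)"
proof -
  have one: "1 \<in> {1..<n}" "1 \<in> {1..n}"
    using n by auto
  define s where "s = sqrt (- 2 * \<sigma> 1)"
  have "\<sigma> 1 < 0"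
    using shifts one by auto
  then have hss: "s * s = - 2 * \<sigma> 1"
    unfolding s_def by simp
  have "msum d (\<lambda>i. (g(1 := g 1 + g 2)) i \<cdot>\<^sub>m X i) {1..1} = X 1"
    using g X1_carrier by (intro eq_matI) auto
  then have lhs: "riccati A E B C H (msum d (\<lambda>i. g i \<cdot>\<^sub>m X i) {1..2})
     = R 1 * T * transpose_mat (R 1)
       + (g 2 * s) \<cdot>\<^sub>m (R 1 * T * transpose_mat (Rstep 1) + Rstep 1 * T * transpose_mat (R 1))
       - (2 * g 2 * \<sigma> 1) \<cdot>\<^sub>m (Rstep 1 * Yt 2 * transpose_mat (Rstep 1))
       - (2 * g 2 * g 2 * \<sigma> 1) \<cdot>\<^sub>m (Rstep 1 * (T - Yt 2) * transpose_mat (Rstep 1))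
       + g 2 \<cdot>\<^sub>m (transpose_mat E * (X 1 - X 1) * B * minv H * transpose_mat B * Delta 1 * E
           + transpose_mat
             (transpose_mat E * (X 1 - X 1) * B * minv H * transpose_mat B * Delta 1 * E))"
    using riccati_merge_last[OF one(1), of g, unfolded Suc_1] res1 unfolding s_def by simp
  have "hcats d R 2 = hcat (R 1) (R 1 + s \<cdot>\<^sub>m Rstep 1)"
    using R1 R_Suc[OF one(1), unfolded Suc_1] unfolding s_def
    by (simp add: numeral_2_eq_2 hcat_zero_left)
  then have rhs: "hcats d R 2 * RHn r T Yt CC \<sigma> 2 g * transpose_mat (hcats d R 2)
     = 1 \<cdot>\<^sub>m (R 1 * T * transpose_mat (R 1))
       + (g 2 * s) \<cdot>\<^sub>m (R 1 * T * transpose_mat (Rstep 1) + Rstep 1 * T * transpose_mat (R 1))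
       - (2 * g 2 * \<sigma> 1) \<cdot>\<^sub>m (Rstep 1 * Yt 2 * transpose_mat (Rstep 1))
       - (2 * g 2 * g 2 * \<sigma> 1) \<cdot>\<^sub>m (Rstep 1 * (T - Yt 2) * transpose_mat (Rstep 1))"
    unfolding RHn_two[OF g]
    using sandwich_step_block[OF R1 Rstep_carrier[OF one(1)] T Yt_carrier[OF one(1), unfolded Suc_1]
      hss]
    by simp
  note cars = A E B C minv_H_carrier X1_carrier Delta_carrier[OF one(1)] Rstep_carrier[OF one(1)]
    Yt_carrier[OF one(1), unfolded Suc_1] T R1
  note dims = cars[THEN carrier_matD(1)] cars[THEN carrier_matD(2)]
  show ?thesis
    unfolding lhs rhs
    apply (simp only: mat_expand_simps mat_dim_simps dims simp_thms transpose_transpose)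
    apply (rule eq_matI)
     apply (simp_all only: mat_entry_simps mat_dim_simps dims)
    done
qed

lemma sandwich_RHn_Suc:
  fixes g :: "nat \<Rightarrow> real"
  assumes m: "2 \<le> m" "Suc m \<le> n" and g: "(\<Sum>i=1..Suc m. g i) = 1"
  defines "g' \<equiv> g(m := g m + g (Suc m))"
  defines "Z \<equiv> transpose_mat E * (X m - msum d (\<lambda>i. g' i \<cdot>\<^sub>m X i) {1..m})
    * B * minv H * transpose_mat B * Delta m * E"
  shows "hcats d R (Suc m) * RHn r T Yt CC \<sigma> (Suc m) g * transpose_mat (hcats d R (Suc m))
    = hcats d R m * RHn r T Yt CC \<sigma> m g' * transpose_mat (hcats d R m)
      + (0 \<cdot>\<^sub>m (R m * T * transpose_mat (R m))
         + (g (Suc m) * sqrt (- 2 * \<sigma> m)) \<cdot>\<^sub>m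
           (R m * T * transpose_mat (Rstep m) + Rstep m * T * transpose_mat (R m))
         - (2 * g (Suc m) * \<sigma> m) \<cdot>\<^sub>m (Rstep m * Yt (Suc m) * transpose_mat (Rstep m))
         - (2 * g (Suc m) * g (Suc m) * \<sigma> m) \<cdot>\<^sub>m
           (Rstep m * (T - Yt (Suc m)) * transpose_mat (Rstep m)))
      + g (Suc m) \<cdot>\<^sub>m Z + transpose_mat (g (Suc m) \<cdot>\<^sub>m Z)"
proof -
  obtain k where m_eq: "m = Suc (Suc k)"
    using m(1) by (metis add_2_eq_Suc le_Suc_ex)
  have k: "Suc (Suc (Suc k)) \<le> n"
    using m(2) m_eq by simp
  have hm: "m \<in> {1..<n}"
    using m by auto
  define Ct where "Ct = cross_block r k (cross_col r CC \<sigma> k g)"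
  have hN: "hcats d R (Suc m) \<in> carrier_mat d (Suc m * r)"
    using m by (intro hcats_R_carrier) simp
  have RHn_m: "RHn r T Yt CC \<sigma> m g' \<in> carrier_mat (m * r) (m * r)"
    by (rule RHn_radi_carrier) (use m in auto)
  have blocks: "blkdiag (RHn r T Yt CC \<sigma> m g') (0\<^sub>m r r) \<in> carrier_mat (Suc m * r) (Suc m * r)"
    "blkdiag (0\<^sub>m (Suc k * r) (Suc k * r)) (step_block 0 (g (Suc m)) T (Yt (Suc m)))
       \<in> carrier_mat (Suc m * r) (Suc m * r)"
    "Ct \<in> carrier_mat (Suc m * r) (Suc m * r)"
  proof -
    show "blkdiag (RHn r T Yt CC \<sigma> m g') (0\<^sub>m r r) \<in> carrier_mat (Suc m * r) (Suc m * r)"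
      using RHn_m by (intro carrier_matI) auto
    have "step_block 0 (g (Suc m)) T (Yt (Suc m)) \<in> carrier_mat (r + r) (r + r)"
      by (rule step_block_carrier[OF T Yt_carrier[OF hm]])
    then show "blkdiag (0\<^sub>m (Suc k * r) (Suc k * r)) (step_block 0 (g (Suc m)) T (Yt (Suc m)))
       \<in> carrier_mat (Suc m * r) (Suc m * r)"
      unfolding m_eq by (intro carrier_matI) auto
    show "Ct \<in> carrier_mat (Suc m * r) (Suc m * r)"
      unfolding Ct_def m_eq by (rule cross_block_carrier[OF cross_col_carrier[OF k]])
  qed
  have "RHn r T Yt CC \<sigma> (Suc m) g
    = blkdiag (RHn r T Yt CC \<sigma> m g') (0\<^sub>m r r)
      + blkdiag (0\<^sub>m (Suc k * r) (Suc k * r)) (step_block 0 (g (Suc m)) T (Yt (Suc m)))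
        + (Ct + transpose_mat Ct)"
    using RHn_Suc_Suc_Suc[of r T Yt CC \<sigma> k g, folded m_eq, folded g'_def, folded Ct_def] .
  then have expand: "hcats d R (Suc m) * RHn r T Yt CC \<sigma> (Suc m) g
    * transpose_mat (hcats d R (Suc m))
    = hcats d R (Suc m) * blkdiag (RHn r T Yt CC \<sigma> m g') (0\<^sub>m r r)
      * transpose_mat (hcats d R (Suc m))
      + hcats d R (Suc m)
        * blkdiag (0\<^sub>m (Suc k * r) (Suc k * r)) (step_block 0 (g (Suc m)) T (Yt (Suc m)))
        * transpose_mat (hcats d R (Suc m))
      + hcats d R (Suc m) * Ct * transpose_mat (hcats d R (Suc m))
      + transpose_mat (hcats d R (Suc m) * Ct * transpose_mat (hcats d R (Suc m)))"
    using sandwich_add_transpose[OF hN blocks] by simp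
  have previous: "hcats d R (Suc m) * blkdiag (RHn r T Yt CC \<sigma> m g') (0\<^sub>m r r)
    * transpose_mat (hcats d R (Suc m))
    = hcats d R m * RHn r T Yt CC \<sigma> m g' * transpose_mat (hcats d R m)"
    unfolding hcats.simps
    by (rule sandwich_hcat_blkdiag_zero_right[OF hcats_R_carrier R_carrier RHn_m]) (use m in auto)
  have g3: "(\<Sum>i=1..Suc (Suc (Suc k)). g i) = 1"
    using g unfolding m_eq .
  show ?thesis
    unfolding expand previous sandwich_last_step_block[OF k, of 0 "g (Suc m)", folded m_eq]
      sandwich_cross_block_eq[OF k g3, folded m_eq, folded g'_def, folded Z_def, folded Ct_def] ..
qed

lemma riccati_weighted_Suc:
  fixes g :: "nat \<Rightarrow> real"
  assumes m: "2 \<le> m" "Suc m \<le> n" and g: "(\<Sum>i=1..Suc m. g i) = 1"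
    and IH: "riccati A E B C H (msum d (\<lambda>i. (g(m := g m + g (Suc m))) i \<cdot>\<^sub>m X i) {1..m})
      = hcats d R m * RHn r T Yt CC \<sigma> m (g(m := g m + g (Suc m))) * transpose_mat (hcats d R m)"
  shows "riccati A E B C H (msum d (\<lambda>i. g i \<cdot>\<^sub>m X i) {1..Suc m})
    = hcats d R (Suc m) * RHn r T Yt CC \<sigma> (Suc m) g * transpose_mat (hcats d R (Suc m))"
proof -
  have hm: "m \<in> {1..<n}" "m \<in> {1..n}"
    using m by auto
  define Xp where "Xp = msum d (\<lambda>i. (g(m := g m + g (Suc m))) i \<cdot>\<^sub>m X i) {1..m}"
  define Z where "Z = transpose_mat E * (X m - Xp) * B * minv H * transpose_mat B * Delta m * E"
  have Xp: "Xp \<in> carrier_mat d d"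
    unfolding Xp_def by (intro carrier_matI) simp_all
  have Z: "Z \<in> carrier_mat d d"
    unfolding Z_def using E B minv_H_carrier Delta_carrier[OF hm(1)] X_carrier[OF hm(2)] Xp by auto
  have "riccati A E B C H Xp \<in> carrier_mat d d"
    unfolding riccati_def using A E B C minv_H_carrier Xp by auto
  note cars = this Z R_carrier[OF hm(2)] Rstep_carrier[OF hm(1)] T Yt_carrier[OF hm(1)]
  note dims = cars[THEN carrier_matD(1)] cars[THEN carrier_matD(2)]
  show ?thesis
    unfolding riccati_merge_last[OF hm(1), of g, folded Xp_def, folded Z_def]
      sandwich_RHn_Suc[OF m g, folded IH Xp_def, folded Z_def]
    apply (simp only: mat_expand_simps mat_dim_simps dims simp_thms transpose_transpose)
    apply (rule eq_matI)
     apply (simp_all only: mat_entry_simps mat_dim_simps dims)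
    done
qed

lemma riccati_weighted_sum:
  "2 \<le> m \<Longrightarrow> m \<le> n \<Longrightarrow> (\<Sum>i=1..m. g i) = 1 \<Longrightarrow>
   riccati A E B C H (msum d (\<lambda>i. g i \<cdot>\<^sub>m X i) {1..m})
     = hcats d R m * RHn r T Yt CC \<sigma> m g * transpose_mat (hcats d R m)"
proof (induction m arbitrary: g rule: nat_induct_at_least)
  case base
  then have "g 1 + g 2 = 1"
    by (simp add: numeral_2_eq_2)
  then show ?case
    by (rule riccati_weighted_two)
next
  case (Suc m)
  show ?case
    using Suc.prems sum_merge_last[of m g] Suc.hyps
    by (intro riccati_weighted_Suc Suc.IH) auto
qed

end

theorem theorem2:
  fixes A E B C H T :: "real mat" and d p q r n :: nat
    and X R V Yt :: "nat \<Rightarrow> real mat" and \<sigma> \<gamma> :: "nat \<Rightarrow> real"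
  assumes A: "A \<in> carrier_mat d d" and E: "E \<in> carrier_mat d d"
    and B: "B \<in> carrier_mat d p" and C: "C \<in> carrier_mat q d"
    and H: "H \<in> carrier_mat p p" and H_sym: "transpose_mat H = H"
    and H_pd: "\<forall>x \<in> carrier_vec p. x \<noteq> 0\<^sub>v p \<longrightarrow> x \<bullet> (H *\<^sub>v x) > 0"
    and T: "T \<in> carrier_mat r r" and T_sym: "transpose_mat T = T"
    and X1: "\<exists>k Z1 D1. Z1 \<in> carrier_mat d k \<and> D1 \<in> carrier_mat k k \<and> transpose_mat D1 = D1
               \<and> X 1 = Z1 * D1 * transpose_mat Z1"
    and R1: "R 1 \<in> carrier_mat d r"
    and res1: "riccati A E B C H (X 1) = R 1 * T * transpose_mat (R 1)"
    and n: "n \<ge> 2"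
    and shifts: "\<forall>i\<in>{1..<n}. \<sigma> i < 0"
    and K_inv: "\<forall>i\<in>{1..<n}. invertible_mat
                  (transpose_mat A - transpose_mat E * X i * B * minv H * transpose_mat B
                   + \<sigma> i \<cdot>\<^sub>m transpose_mat E)"
    and V_def: "\<forall>i\<in>{1..<n}. V (Suc i) = sqrt (- 2 * \<sigma> i) \<cdot>\<^sub>m
                  (minv (transpose_mat A - transpose_mat E * X i * B * minv H * transpose_mat B
                         + \<sigma> i \<cdot>\<^sub>m transpose_mat E) * R i * T)"
    and Y_def: "\<forall>i\<in>{1..<n}. Yt (Suc i) = T - (1 / (2 * \<sigma> i)) \<cdot>\<^sub>m
                  ((transpose_mat (V (Suc i)) * B) * minv H * transpose_mat (transpose_mat (V (Suc i)) * B))"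
    and Y_inv: "\<forall>i\<in>{1..<n}. invertible_mat (Yt (Suc i))"
    and X_def: "\<forall>i\<in>{1..<n}. X (Suc i) = X i + V (Suc i) * minv (Yt (Suc i)) * transpose_mat (V (Suc i))"
    and R_def: "\<forall>i\<in>{1..<n}. R (Suc i) = R i + sqrt (- 2 * \<sigma> i) \<cdot>\<^sub>m
                  (transpose_mat E * V (Suc i) * minv (Yt (Suc i)))"
    and gamma_sum: "(\<Sum>i=1..n. \<gamma> i) = 1"
  shows "(\<forall>y \<in> carrier_vec d. \<exists>z \<in> carrier_vec (n * r).
           riccati A E B C H (msum d (\<lambda>i. \<gamma> i \<cdot>\<^sub>m X i) {1..n}) *\<^sub>v y = hcats d R n *\<^sub>v z)
         \<and> riccati A E B C H (msum d (\<lambda>i. \<gamma> i \<cdot>\<^sub>m X i) {1..n})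
           = hcats d R n
             * RHn r T Yt (\<lambda>i j. transpose_mat (V i) * B * minv H * transpose_mat B * V j) \<sigma> n \<gamma>
             * transpose_mat (hcats d R n)"
proof -
  interpret radi_iteration A E B C H T d p q r n X R V Yt \<sigma>
    using A E B C H H_sym H_pd T T_sym X1 R1 res1 n shifts K_inv V_def Y_def Y_inv X_def R_def
    by unfold_locales
  have factor: "riccati A E B C H (msum d (\<lambda>i. \<gamma> i \<cdot>\<^sub>m X i) {1..n})
      = hcats d R n * RHn r T Yt CC \<sigma> n \<gamma> * transpose_mat (hcats d R n)"
    by (rule riccati_weighted_sum[OF n order.refl gamma_sum])
  have W: "hcats d R n \<in> carrier_mat d (n * r)"
    by (rule hcats_R_carrier) simp
  have M: "RHn r T Yt CC \<sigma> n \<gamma> \<in> carrier_mat (n * r) (n * r)"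
    by (rule RHn_radi_carrier[OF n order.refl])
  have N: "RHn r T Yt CC \<sigma> n \<gamma> * transpose_mat (hcats d R n) \<in> carrier_mat (n * r) d"
    using M W by (meson mult_carrier_mat transpose_carrier_mat)
  have "hcats d R n * RHn r T Yt CC \<sigma> n \<gamma> * transpose_mat (hcats d R n)
      = hcats d R n * (RHn r T Yt CC \<sigma> n \<gamma> * transpose_mat (hcats d R n))"
    using W M by (intro assoc_mult_mat) auto
  then show ?thesis
    using factor mult_mat_vec_in_range[OF W N] by simp
qed

end
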